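(* Let $N\ge3$, $N=2g+1$ or $N=2g+2$ with $g\ge1$, and let $\Phi:(\lambda_1,\dots,\lambda_g,z_1,\dots,z_g,v)\mapsto(f_1,\dots,f_N)$ be the rational map defined in the context. Equip the source with the Poisson brackets $\{\lambda_j,z_k\}=\delta_{jk}z_k$, $\{\lambda_j,\lambda_k\}=\{z_j,z_k\}=\{\lambda_j,v\}=\{z_j,v\}=0$, and the target with $\{f_m,f_n\}=-\delta_{m+1,n}+\delta_{m-1,n}$ (indices mod $N$; for $N$ even restricted to the subspace $f_1+f_3+\cdots+f_{N-1}=f_2+f_4+\cdots+f_N$). Then $\Phi$ is a Poisson map.
   Context: Definition of $\Phi$ (on the generic locus where $\lambda_j$ are pairwise distinct and nonzero and all denominators are nonzero): fix constants $\alpha_1,\dots,\alpha_N$, $\beta_m=\alpha_1+\cdots+\alpha_m$; put $b_0=1,\tilde a_0=0$ if $N=2g+1$ and $b_0=v,\tilde a_0=1$ if $N=2g+2$; $F_1(\lambda)=B(\lambda)=b_0\prod_{j=1}^g(\lambda-\lambda_j)$, $F_2(\lambda)=\tilde A(\lambda)=\bigl(\frac{\tilde a_0}{b_0}+\sum_{j=1}^g\frac{z_j}{B'(\lambda_j)(\lambda-\lambda_j)\lambda_j}\bigr)B(\lambda)$ with $B'(\lambda_j)=b_0\prod_{k\neq j}(\lambda_j-\lambda_k)$; recursively for $m=1,\dots,N-2$: $f_m=F_m(-\beta_m)/F_{m+1}(-\beta_m)$, $F_{m+2}(\lambda)=(F_m(\lambda)-f_mF_{m+1}(\lambda))/(\lambda+\beta_m)$;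 finally $f_{N-1}=F_{N-1}$ and $f_N=2v-(f_1+\cdots+f_{N-1})$. This map sends the spectral Darboux coordinates of the $N$-periodic dressing chain (zeros $\lambda_j$ of the $(1,2)$ entry $B$ of the transition matrix and $z_j=A(\lambda_j)$) and $v=\sum v_n$ to the Noumi–Yamada variables $f_n=v_n+v_{n+1}$. *)

theory Defs
  imports "HOL-Analysis.Analysis" "HOL-Computational_Algebra.Polynomial"
begin

text \<open>Source coordinates: lam j, z j for j in {1..g} (functions nat => real, only the
  values on {1..g} matter) and v. Parameters: N, g, alpha (alpha n for n in {1..N}).\<close>

definition beta :: "(nat \<Rightarrow> real) \<Rightarrow> nat \<Rightarrow> real" where
  "beta al m = (\<Sum>i=1..m. al i)"

definition bzero :: "nat \<Rightarrow> nat \<Rightarrow> real \<Rightarrow> real" where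
  "bzero N g v = (if N = 2*g+1 then 1 else v)"

definition azero :: "nat \<Rightarrow> nat \<Rightarrow> real" where
  "azero N g = (if N = 2*g+1 then 0 else 1)"

definition Bpoly :: "nat \<Rightarrow> nat \<Rightarrow> (nat \<Rightarrow> real) \<Rightarrow> real \<Rightarrow> real poly" where
  "Bpoly N g lam v = smult (bzero N g v) (\<Prod>j\<in>{1..g}. [:- lam j, 1:])"

text \<open>B'(lambda_j) = b0 * prod_{k ~= j} (lambda_j - lambda_k)\<close>
definition Bder :: "nat \<Rightarrow> nat \<Rightarrow> (nat \<Rightarrow> real) \<Rightarrow> real \<Rightarrow> nat \<Rightarrow> real" where
  "Bder N g lam v j = bzero N g v * (\<Prod>k\<in>{1..g}-{j}. (lam j - lam k))"

text \<open>A~(lambda) = (a0/b0 + sum_j z_j / (B'(lambda_j) (lambda - lambda_j) lambda_j)) B(lambda),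
  written as a polynomial, using the exact quotient B(lambda)/(lambda - lambda_j).\<close>
definition Apoly :: "nat \<Rightarrow> nat \<Rightarrow> (nat \<Rightarrow> real) \<Rightarrow> (nat \<Rightarrow> real) \<Rightarrow> real \<Rightarrow> real poly" where
  "Apoly N g lam z v =
     smult (azero N g / bzero N g v) (Bpoly N g lam v)
     + (\<Sum>j\<in>{1..g}. smult (z j / (Bder N g lam v j * lam j)) (Bpoly N g lam v div [:- lam j, 1:]))"

text \<open>F_1 = B, F_2 = A~, F_{m+2} = (F_m - f_m F_{m+1}) / (lambda + beta_m),
  f_m = F_m(-beta_m)/F_{m+1}(-beta_m).  (F_0 is an unused dummy.)\<close>
fun FF :: "nat \<Rightarrow> nat \<Rightarrow> (nat \<Rightarrow> real) \<Rightarrow> (nat \<Rightarrow> real) \<Rightarrow> (nat \<Rightarrow> real) \<Rightarrow> real \<Rightarrow> nat \<Rightarrow> real poly" where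
  "FF N g al lam z v 0 = 0"
| "FF N g al lam z v (Suc 0) = Bpoly N g lam v"
| "FF N g al lam z v (Suc (Suc 0)) = Apoly N g lam z v"
| "FF N g al lam z v (Suc (Suc (Suc m))) =
     (let Fm = FF N g al lam z v (Suc m);
          Fm1 = FF N g al lam z v (Suc (Suc m));
          c = poly Fm (- beta al (Suc m)) / poly Fm1 (- beta al (Suc m))
      in (Fm - smult c Fm1) div [:beta al (Suc m), 1:])"

definition fcoef :: "nat \<Rightarrow> nat \<Rightarrow> (nat \<Rightarrow> real) \<Rightarrow> (nat \<Rightarrow> real) \<Rightarrow> (nat \<Rightarrow> real) \<Rightarrow> real \<Rightarrow> nat \<Rightarrow> real" where
  "fcoef N g al lam z v m =
     poly (FF N g al lam z v m) (- beta al m) / poly (FF N g al lam z v (Suc m)) (- beta al m)"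

text \<open>The map Phi, component n (n in {1..N}):
  f_m for m <= N-2, f_{N-1} = F_{N-1} (a constant polynomial), f_N = 2v - (f_1+...+f_{N-1}).\<close>
definition Phi :: "nat \<Rightarrow> nat \<Rightarrow> (nat \<Rightarrow> real) \<Rightarrow> (nat \<Rightarrow> real) \<Rightarrow> (nat \<Rightarrow> real) \<Rightarrow> real \<Rightarrow> nat \<Rightarrow> real" where
  "Phi N g al lam z v n =
     (if n \<le> N - 2 then fcoef N g al lam z v n
      else if n = N - 1 then coeff (FF N g al lam z v (N - 1)) 0
      else 2 * v - ((\<Sum>i=1..N-2. fcoef N g al lam z v i) + coeff (FF N g al lam z v (N - 1)) 0))"

definition generic :: "nat \<Rightarrow> nat \<Rightarrow> (nat \<Rightarrow> real) \<Rightarrow> (nat \<Rightarrow> real) \<Rightarrow> (nat \<Rightarrow> real) \<Rightarrow> real \<Rightarrow> bool" where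
  "generic N g al lam z v \<longleftrightarrow>
     inj_on lam {1..g} \<and> (\<forall>j\<in>{1..g}. lam j \<noteq> 0) \<and> bzero N g v \<noteq> 0 \<and>
     (\<forall>m\<in>{1..N-2}. poly (FF N g al lam z v (Suc m)) (- beta al m) \<noteq> 0)"

definition dlam :: "((nat \<Rightarrow> real) \<Rightarrow> (nat \<Rightarrow> real) \<Rightarrow> real \<Rightarrow> real) \<Rightarrow> nat \<Rightarrow> (nat \<Rightarrow> real) \<Rightarrow> (nat \<Rightarrow> real) \<Rightarrow> real \<Rightarrow> real" where
  "dlam F j lam z v = deriv (\<lambda>t. F (lam(j := t)) z v) (lam j)"

definition dz :: "((nat \<Rightarrow> real) \<Rightarrow> (nat \<Rightarrow> real) \<Rightarrow> real \<Rightarrow> real) \<Rightarrow> nat \<Rightarrow> (nat \<Rightarrow> real) \<Rightarrow> (nat \<Rightarrow> real) \<Rightarrow> real \<Rightarrow> real" where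
  "dz F j lam z v = deriv (\<lambda>t. F lam (z(j := t)) v) (z j)"

text \<open>Source Poisson bracket induced by {lambda_j, z_k} = delta_jk z_k, all others 0
  (v is a Casimir):  {F,G} = sum_j z_j (dF/dlambda_j dG/dz_j - dF/dz_j dG/dlambda_j).\<close>
definition srcPB :: "nat \<Rightarrow> ((nat \<Rightarrow> real) \<Rightarrow> (nat \<Rightarrow> real) \<Rightarrow> real \<Rightarrow> real)
     \<Rightarrow> ((nat \<Rightarrow> real) \<Rightarrow> (nat \<Rightarrow> real) \<Rightarrow> real \<Rightarrow> real) \<Rightarrow> (nat \<Rightarrow> real) \<Rightarrow> (nat \<Rightarrow> real) \<Rightarrow> real \<Rightarrow> real" where
  "srcPB g F G lam z v =
     (\<Sum>j\<in>{1..g}. z j * (dlam F j lam z v * dz G j lam z v - dz F j lam z v * dlam G j lam z v))"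

definition cnext :: "nat \<Rightarrow> nat \<Rightarrow> nat" where
  "cnext N m = (if m = N then 1 else m + 1)"

definition tgtPB :: "nat \<Rightarrow> nat \<Rightarrow> nat \<Rightarrow> real" where
  "tgtPB N m n = (if n = cnext N m then -1 else 0) + (if m = cnext N n then 1 else 0)"

end

theory Submission
  imports Defs
begin

text \<open>Let P, Q be consecutive polynomials F m, F (m + 1) of the recursion, with gradients taken
  in the source coordinates. The initial pair (B, A) satisfies the Sklyanin relations
  {P(x), P(y)} = {Q(x), Q(y)} = 0 and (x - y) {P(x), Q(y)} = P(y) Q(x) - P(x) Q(y): B only depends
  on the lam j, and A(lam j) = z j / lam j with {lam j, z k} = delta j k z k. If f = P(c) / Q(c)
  and R = (P - f Q) / (lambda - c), these relations give {f, Q(y)} = - R(y) and {f, R(y)} = 0, and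
  they are inherited by the pair (Q, R). Hence consecutive f m bracket to -1, and f m commutes with
  every later F k, so with every f n for n >= m + 2. The remaining entries come from the last step:
  f (N - 1) = F (N - 1)(0) with {f (N - 2), F (N - 1)(0)} = - F N(0), and counting degrees in the
  recursion shows F N(0) = 1; f N = 2 v - (f 1 + ... + f (N - 1)) with v a Casimir. For even N the
  same degree count gives f 1 + f 3 + ... + f (N - 1) = v.\<close>

section \<open>Division by a monic linear polynomial\<close>

lemma div_linear_eq_synthetic_div: "p div [:-c, 1:] = synthetic_div p (c::real)"
proof -
  have "p = [:poly p c:] + synthetic_div p c * [:-c, 1:]"
    using synthetic_div_correct'[of c p] by (simp add: algebra_simps)
  then have "p div [:-c, 1:] = synthetic_div p c + [:poly p c:] div [:-c, 1:]"
    by (metis div_mult_self1 pCons_eq_0_iff zero_neq_one)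
  then show ?thesis by (simp add: div_poly_less)
qed

lemma poly_div_linear:
  "x \<noteq> c \<Longrightarrow> poly (p div [:-c, 1:]) x = (poly p x - poly p c) / (x - c)" for c :: real
  using synthetic_div_correct'[of c p, THEN arg_cong[where f="\<lambda>q. poly q x"]]
  by (simp add: div_linear_eq_synthetic_div field_simps)

lemma coeff_synthetic_div:
  "coeff (synthetic_div p c) i = coeff p (Suc i) + c * coeff (synthetic_div p (c::real)) (Suc i)"
  using synthetic_div_correct[of p c, THEN arg_cong[where f="\<lambda>q. coeff q (Suc i)"]] by simp

lemma degree_div_linear_le:
  "degree p \<le> Suc n \<Longrightarrow> degree (p div [:-c, 1:]) \<le> n" for c :: real
  by (simp add: div_linear_eq_synthetic_div degree_synthetic_div)

lemma coeff_div_linear_top: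
  "degree p \<le> Suc n \<Longrightarrow> coeff (p div [:-c, 1:]) n = coeff p (Suc n)" for c :: real
  using coeff_synthetic_div[of p c n]
  by (simp add: div_linear_eq_synthetic_div degree_synthetic_div coeff_eq_0)

section \<open>Coefficientwise derivatives of polynomial-valued functions\<close>

text \<open>The degree bound makes evaluation a finite sum of coefficients, so that it commutes
  with the derivative (\<open>poly_has_real_derivative\<close>).\<close>

definition has_poly_derivative :: "(real \<Rightarrow> real poly) \<Rightarrow> real poly \<Rightarrow> real \<Rightarrow> bool"
    (infix "has'_poly'_derivative" 50) where
  "(F has_poly_derivative p) x \<longleftrightarrow> (\<exists>n. \<forall>t. degree (F t) \<le> n) \<and>
     (\<forall>i. ((\<lambda>t. coeff (F t) i) has_real_derivative coeff p i) (at x))"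

lemma has_poly_derivative_coeff:
  "(F has_poly_derivative p) x \<Longrightarrow> ((\<lambda>t. coeff (F t) i) has_real_derivative coeff p i) (at x)"
  unfolding has_poly_derivative_def by blast

lemma has_poly_derivative_degree_le:
  assumes "(F has_poly_derivative p) x" and "\<forall>t. degree (F t) \<le> n"
  shows "degree p \<le> n"
proof (rule degree_le, intro allI impI)
  fix i assume "n < i"
  then have "(\<lambda>t. coeff (F t) i) = (\<lambda>t. 0)"
    using assms(2) by (metis coeff_eq_0 le_less_trans)
  then show "coeff p i = 0"
    using has_poly_derivative_coeff[OF assms(1), of i] DERIV_const DERIV_unique by metis
qed

lemma has_poly_derivative_unique:
  "(F has_poly_derivative p) x \<Longrightarrow> (F has_poly_derivative q) x \<Longrightarrow> p = q"
  unfolding has_poly_derivative_def by (metis DERIV_unique poly_eqI)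

lemma has_poly_derivative_const: "((\<lambda>t. p) has_poly_derivative 0) x"
  unfolding has_poly_derivative_def by auto

lemma has_poly_derivative_linear: "((\<lambda>t. [:-t, 1:]) has_poly_derivative [:-1:]) x"
proof -
  have "((\<lambda>t. coeff [:-t, 1:] i) has_real_derivative coeff [:-1:] i) (at x)" for i
    by (cases i) (auto intro!: derivative_eq_intros simp: coeff_pCons split: nat.split)
  moreover have "\<forall>t. degree [:-t, 1::real:] \<le> 1" by simp
  ultimately show ?thesis unfolding has_poly_derivative_def by blast
qed

lemma has_poly_derivative_add:
  assumes "(F has_poly_derivative p) x" and "(G has_poly_derivative q) x"
  shows "((\<lambda>t. F t + G t) has_poly_derivative p + q) x"
proof -
  obtain n1 n2 where "\<forall>t. degree (F t) \<le> n1" "\<forall>t. degree (G t) \<le> n2"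
    using assms unfolding has_poly_derivative_def by blast
  then have "\<forall>t. degree (F t + G t) \<le> max n1 n2"
    by (meson degree_add_le max.cobounded1 max.cobounded2 order.trans)
  then show ?thesis
    using assms unfolding has_poly_derivative_def by (auto intro!: derivative_eq_intros)
qed

lemma has_poly_derivative_minus:
  "(F has_poly_derivative p) x \<Longrightarrow> ((\<lambda>t. - F t) has_poly_derivative - p) x"
  unfolding has_poly_derivative_def by (auto intro!: derivative_eq_intros)

lemma has_poly_derivative_diff:
  "(F has_poly_derivative p) x \<Longrightarrow> (G has_poly_derivative q) x \<Longrightarrow>
    ((\<lambda>t. F t - G t) has_poly_derivative p - q) x"
  using has_poly_derivative_add[OF _ has_poly_derivative_minus, of F p x G q] by simp

lemma has_poly_derivative_smult:
  assumes "(a has_real_derivative a') (at x)" and "(F has_poly_derivative p) x"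
  shows "((\<lambda>t. smult (a t) (F t)) has_poly_derivative smult a' (F x) + smult (a x) p) x"
  using assms(2) unfolding has_poly_derivative_def
  by (auto intro!: derivative_eq_intros assms(1) order.trans[OF degree_smult_le])

lemma has_poly_derivative_cmult:
  "(F has_poly_derivative p) x \<Longrightarrow> ((\<lambda>t. smult a (F t)) has_poly_derivative smult a p) x"
  using has_poly_derivative_smult[OF DERIV_const] by fastforce

lemma has_poly_derivative_mult:
  assumes F: "(F has_poly_derivative p) x" and G: "(G has_poly_derivative q) x"
  shows "((\<lambda>t. F t * G t) has_poly_derivative p * G x + F x * q) x"
proof -
  obtain n1 n2 where "\<forall>t. degree (F t) \<le> n1" "\<forall>t. degree (G t) \<le> n2"
    using assms unfolding has_poly_derivative_def by blast
  then have "\<forall>t. degree (F t * G t) \<le> n1 + n2"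
    by (meson add_mono degree_mult_le order.trans)
  moreover have "((\<lambda>t. coeff (F t * G t) i) has_real_derivative coeff (p * G x + F x * q) i) (at x)"
    for i
  proof -
    have "((\<lambda>t. \<Sum>k\<le>i. coeff (F t) k * coeff (G t) (i - k)) has_real_derivative
            (\<Sum>k\<le>i. coeff p k * coeff (G x) (i - k) + coeff (F x) k * coeff q (i - k))) (at x)"
      by (auto intro!: derivative_eq_intros has_poly_derivative_coeff[OF F]
          has_poly_derivative_coeff[OF G] sum.cong simp: mult.commute)
    then show ?thesis by (simp only: coeff_add coeff_mult sum.distrib)
  qed
  ultimately show ?thesis unfolding has_poly_derivative_def by blast
qed

lemma has_poly_derivative_sum:
  assumes "finite S" and "\<And>k. k \<in> S \<Longrightarrow> (F k has_poly_derivative p k) x"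
  shows "((\<lambda>t. \<Sum>k\<in>S. F k t) has_poly_derivative (\<Sum>k\<in>S. p k)) x"
  using assms
  by (induction S rule: finite_induct) (auto intro: has_poly_derivative_add has_poly_derivative_const)

lemma has_poly_derivative_prod:
  assumes "finite S" and "\<And>k. k \<in> S \<Longrightarrow> (F k has_poly_derivative p k) x"
  shows "\<exists>q. ((\<lambda>t. \<Prod>k\<in>S. F k t) has_poly_derivative q) x"
  using assms
proof (induction S rule: finite_induct)
  case empty
  show ?case using has_poly_derivative_const by auto
next
  case (insert a S)
  then obtain q where "((\<lambda>t. \<Prod>k\<in>S. F k t) has_poly_derivative q) x" by auto
  with insert show ?case using has_poly_derivative_mult[of "F a" "p a" x] by fastforce
qed

lemma has_poly_derivative_div_linear:
  assumes F: "(F has_poly_derivative p) x"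
  shows "((\<lambda>t. F t div [:-c, 1:]) has_poly_derivative p div [:-c, 1:]) x"
proof -
  obtain n where n: "\<forall>t. degree (F t) \<le> n"
    using F unfolding has_poly_derivative_def by blast
  have top: "coeff (synthetic_div q c) i = 0" if "degree q \<le> n" "n \<le> i" for q :: "real poly" and i
  proof (cases "degree q = 0")
    case True
    then have "synthetic_div q c = 0" by (simp add: synthetic_div_eq_0_iff)
    then show ?thesis by simp
  next
    case False
    then show ?thesis using that by (intro coeff_eq_0) (simp add: degree_synthetic_div)
  qed
  have p: "degree p \<le> n"
    using has_poly_derivative_degree_le[OF F n] .
  \<comment> \<open>Synthetic division computes the coefficients from the top down.\<close>
  have "((\<lambda>t. coeff (synthetic_div (F t) c) i) has_real_derivative coeff (synthetic_div p c) i) (at x)"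
    if "i \<le> n" for i
    using that
  proof (induction i rule: inc_induct)
    case base
    then show ?case using top n p by simp
  next
    case (step i)
    then show ?case
      by (subst (1 2) coeff_synthetic_div)
        (auto intro!: derivative_eq_intros has_poly_derivative_coeff[OF F])
  qed
  moreover have "n \<le> i \<Longrightarrow> coeff (synthetic_div (F t) c) i = 0" for t i
    using top n by blast
  ultimately have
    "((\<lambda>t. coeff (synthetic_div (F t) c) i) has_real_derivative coeff (synthetic_div p c) i) (at x)"
    for i
    using top[OF p] by (cases "i \<le> n") auto
  then show ?thesis
    unfolding has_poly_derivative_def div_linear_eq_synthetic_div
    using n by (auto simp: degree_synthetic_div intro: le_trans[OF diff_le_self])
qed

lemma poly_has_real_derivative:
  assumes F: "(F has_poly_derivative p) x"
  shows "((\<lambda>t. poly (F t) y) has_real_derivative poly p y) (at x)"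
proof -
  obtain n where n: "\<forall>t. degree (F t) \<le> n"
    using F unfolding has_poly_derivative_def by blast
  have poly_eq: "poly q y = (\<Sum>i\<le>n. coeff q i * y ^ i)" if "degree q \<le> n" for q :: "real poly"
    by (subst poly_as_sum_of_monoms'[OF that, symmetric]) (simp add: poly_sum poly_monom)
  have "((\<lambda>t. \<Sum>i\<le>n. coeff (F t) i * y ^ i) has_real_derivative (\<Sum>i\<le>n. coeff p i * y ^ i))
      (at x)"
    by (auto intro!: derivative_eq_intros has_poly_derivative_coeff[OF F])
  then show ?thesis
    using poly_eq[OF has_poly_derivative_degree_le[OF F n]] poly_eq n by simp
qed

section \<open>Sklyanin pairs and the recursion step\<close>

text \<open>A gradient on the source is a function of (j, b): the component (j, True) is the partial
  derivative in lam j, the component (j, False) the one in z j. A \<open>poly_grad\<close> describes a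
  polynomial depending on the source point; its value at x is the gradient of the value at x.\<close>

type_synonym grad = "nat \<Rightarrow> bool \<Rightarrow> real"
type_synonym poly_grad = "nat \<Rightarrow> bool \<Rightarrow> real poly"

definition grad_at :: "poly_grad \<Rightarrow> real \<Rightarrow> grad" where
  "grad_at dP x = (\<lambda>j b. poly (dP j b) x)"

definition ratio_at :: "real poly \<Rightarrow> real poly \<Rightarrow> real \<Rightarrow> real" where
  "ratio_at P Q c = poly P c / poly Q c"

definition ratio_grad :: "real poly \<Rightarrow> poly_grad \<Rightarrow> real poly \<Rightarrow> poly_grad \<Rightarrow> real \<Rightarrow> grad" where
  "ratio_grad P dP Q dQ c =
     (\<lambda>j b. (poly (dP j b) c * poly Q c - poly P c * poly (dQ j b) c) / (poly Q c)^2)"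

definition next_poly :: "real poly \<Rightarrow> real poly \<Rightarrow> real \<Rightarrow> real poly" where
  "next_poly P Q c = (P - smult (ratio_at P Q c) Q) div [:-c, 1:]"

definition next_grad :: "real poly \<Rightarrow> poly_grad \<Rightarrow> real poly \<Rightarrow> poly_grad \<Rightarrow> real \<Rightarrow> poly_grad" where
  "next_grad P dP Q dQ c =
     (\<lambda>j b. (dP j b - smult (ratio_grad P dP Q dQ c j b) Q - smult (ratio_at P Q c) (dQ j b))
             div [:-c, 1:])"

lemma ratio_grad_eq:
  "poly Q c \<noteq> 0 \<Longrightarrow> ratio_grad P dP Q dQ c =
    (\<lambda>j b. (1 / poly Q c) * grad_at dP c j b + (- poly P c / (poly Q c)^2) * grad_at dQ c j b)"
  by (auto simp: fun_eq_iff ratio_grad_def grad_at_def field_simps power2_eq_square)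

lemma poly_next_poly:
  "poly Q c \<noteq> 0 \<Longrightarrow> x \<noteq> c \<Longrightarrow>
    poly (next_poly P Q c) x = (poly P x - ratio_at P Q c * poly Q x) / (x - c)"
  unfolding next_poly_def by (simp add: poly_div_linear ratio_at_def)

lemma grad_at_next_grad:
  assumes "poly Q c \<noteq> 0" and "x \<noteq> c"
  shows "grad_at (next_grad P dP Q dQ c) x =
    (\<lambda>j b. (1 / (x - c)) * grad_at dP x j b + (- poly Q x / (x - c)) * ratio_grad P dP Q dQ c j b
           + (- ratio_at P Q c / (x - c)) * grad_at dQ x j b)"
proof -
  have "poly (dP j b - smult (ratio_grad P dP Q dQ c j b) Q - smult (ratio_at P Q c) (dQ j b)) c = 0"
    for j b
    using assms(1) by (simp add: ratio_grad_def ratio_at_def field_simps power2_eq_square)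
  with assms(2) show ?thesis
    unfolding grad_at_def next_grad_def
    by (auto simp: fun_eq_iff poly_div_linear diff_divide_distrib add_divide_distrib)
qed

text \<open>The bracket identities below divide by x - c. They are proved for x \<noteq> c and
  extended to x = c by continuity, both sides being polynomial in x.\<close>

lemma isCont_eq_off_point:
  fixes F G :: "real \<Rightarrow> real"
  assumes "isCont F c" and "isCont G c" and "\<And>x. x \<noteq> c \<Longrightarrow> F x = G x"
  shows "F y = G y"
proof (cases "y = c")
  case True
  have "(F \<longlongrightarrow> G c) (at c)"
    using assms(2) unfolding isCont_def
    by (rule Lim_transform_eventually) (auto simp: eventually_at_filter assms(3))
  with assms(1) show ?thesis
    unfolding isCont_def True using LIM_unique by blast
qed (use assms(3) in simp)

lemma isCont_eq_off_point2:
  fixes F G :: "real \<Rightarrow> real \<Rightarrow> real"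
  assumes "\<And>y. isCont (\<lambda>x. F x y) c" and "\<And>y. isCont (\<lambda>x. G x y) c"
    and "\<And>x. isCont (F x) c" and "\<And>x. isCont (G x) c"
    and "\<And>x y. x \<noteq> c \<Longrightarrow> y \<noteq> c \<Longrightarrow> F x y = G x y"
  shows "F x y = G x y"
proof (rule isCont_eq_off_point[where F="\<lambda>x. F x y" and G="\<lambda>x. G x y"])
  fix x assume "x \<noteq> c"
  then show "F x y = G x y"
    using isCont_eq_off_point[where F="F x" and G="G x", OF assms(3,4)] assms(5) by blast
qed (use assms(1,2) in blast)+

context
  fixes g :: nat and z :: "nat \<Rightarrow> real"
begin

definition bracket :: "grad \<Rightarrow> grad \<Rightarrow> real" where
  "bracket a b = (\<Sum>j\<in>{1..g}. z j * (a j True * b j False - a j False * b j True))"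

lemma bracket_antisym: "bracket a b = - bracket b a"
  unfolding bracket_def by (simp add: sum_negf[symmetric] algebra_simps)

lemma bracket_self: "bracket a a = 0"
  using bracket_antisym[of a a] by simp

lemma bracket_lincomb_left:
  "bracket (\<lambda>j b. x * a j b + y * c j b) d = x * bracket a d + y * bracket c d"
  unfolding bracket_def by (simp add: sum_distrib_left sum.distrib[symmetric] algebra_simps)

lemma bracket_lincomb_right:
  "bracket d (\<lambda>j b. x * a j b + y * c j b) = x * bracket d a + y * bracket d c"
  unfolding bracket_def by (simp add: sum_distrib_left sum.distrib[symmetric] algebra_simps)

lemma bracket_lincomb3_left:
  "bracket (\<lambda>j b. x * a j b + y * c j b + w * e j b) d =
    x * bracket a d + y * bracket c d + w * bracket e d"
  unfolding bracket_def by (simp add: sum_distrib_left sum.distrib[symmetric] algebra_simps)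

lemma bracket_lincomb3_right:
  "bracket d (\<lambda>j b. x * a j b + y * c j b + w * e j b) =
    x * bracket d a + y * bracket d c + w * bracket d e"
  unfolding bracket_def by (simp add: sum_distrib_left sum.distrib[symmetric] algebra_simps)

lemma bracket_neg_sum_right:
  "finite S \<Longrightarrow> bracket d (\<lambda>j b. - (\<Sum>i\<in>S. a i j b)) = - (\<Sum>i\<in>S. bracket d (a i))"
  unfolding bracket_def
  by (simp add: sum_distrib_left sum_subtractf[symmetric] sum_negf[symmetric] sum_distrib_right
      algebra_simps sum.swap[of _ S])

lemma isCont_bracket_grad_at_left [continuous_intros]: "isCont (\<lambda>x. bracket (grad_at dP x) a) c"
  unfolding bracket_def grad_at_def by (intro continuous_intros)

lemma isCont_bracket_grad_at_right [continuous_intros]: "isCont (\<lambda>x. bracket a (grad_at dP x)) c"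
  unfolding bracket_def grad_at_def by (intro continuous_intros)

definition poisson_pair :: "real poly \<Rightarrow> poly_grad \<Rightarrow> real poly \<Rightarrow> poly_grad \<Rightarrow> bool" where
  "poisson_pair P dP Q dQ \<longleftrightarrow>
     (\<forall>x y. bracket (grad_at dP x) (grad_at dP y) = 0) \<and>
     (\<forall>x y. bracket (grad_at dQ x) (grad_at dQ y) = 0) \<and>
     (\<forall>x y. (x - y) * bracket (grad_at dP x) (grad_at dQ y) = poly P y * poly Q x - poly P x * poly Q y)"

lemma bracket_ratio_grad_eq_0:
  assumes "poly Q c \<noteq> 0"
    and "\<And>y. bracket a (grad_at dP y) = 0" and "\<And>y. bracket a (grad_at dQ y) = 0"
  shows "bracket a (ratio_grad P dP Q dQ c) = 0"
  unfolding ratio_grad_eq[OF assms(1)] bracket_lincomb_right assms(2,3) by simp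

lemma bracket_next_grad_eq_0:
  assumes "poly Q c \<noteq> 0"
    and "\<And>y. bracket a (grad_at dP y) = 0" and "\<And>y. bracket a (grad_at dQ y) = 0"
  shows "bracket a (grad_at (next_grad P dP Q dQ c) y) = 0"
proof (rule isCont_eq_off_point[where F="\<lambda>y. bracket a (grad_at (next_grad P dP Q dQ c) y)"
      and G="\<lambda>y. 0" and c=c])
  fix y :: real assume "y \<noteq> c"
  show "bracket a (grad_at (next_grad P dP Q dQ c) y) = 0"
    unfolding grad_at_next_grad[OF assms(1) \<open>y \<noteq> c\<close>] bracket_lincomb3_right assms(2,3)
      bracket_ratio_grad_eq_0[OF assms] by simp
qed (auto intro!: continuous_intros)

context
  fixes P Q :: "real poly" and dP dQ :: poly_grad and c :: real
  assumes Q_c: "poly Q c \<noteq> 0" and pair: "poisson_pair P dP Q dQ"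
begin

lemma bracket_P_P: "bracket (grad_at dP x) (grad_at dP y) = 0"
  and bracket_Q_Q: "bracket (grad_at dQ x) (grad_at dQ y) = 0"
  and bracket_P_Q: "(x - y) * bracket (grad_at dP x) (grad_at dQ y) = poly P y * poly Q x - poly P x * poly Q y"
  using pair unfolding poisson_pair_def by blast+

lemma bracket_P_Q_swap: "bracket (grad_at dP x) (grad_at dQ y) = bracket (grad_at dP y) (grad_at dQ x)"
proof (cases "x = y")
  case False
  have "(x - y) * (bracket (grad_at dP x) (grad_at dQ y) - bracket (grad_at dP y) (grad_at dQ x)) = 0"
    using bracket_P_Q[of x y] bracket_P_Q[of y x] by algebra
  with False show ?thesis by simp
qed simp

lemma bracket_P_Q_eq:
  "x \<noteq> y \<Longrightarrow>
    bracket (grad_at dP x) (grad_at dQ y) = (poly P y * poly Q x - poly P x * poly Q y) / (x - y)"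
  using bracket_P_Q[of x y] by (simp add: eq_divide_eq mult.commute)

lemma bracket_ratio_grad_Q:
  "bracket (ratio_grad P dP Q dQ c) (grad_at dQ y) = - poly (next_poly P Q c) y"
proof (rule isCont_eq_off_point[where F="\<lambda>y. bracket (ratio_grad P dP Q dQ c) (grad_at dQ y)"
      and G="\<lambda>y. - poly (next_poly P Q c) y" and c=c])
  fix y :: real assume y: "y \<noteq> c"
  have "bracket (ratio_grad P dP Q dQ c) (grad_at dQ y) = bracket (grad_at dP c) (grad_at dQ y) / poly Q c"
    unfolding ratio_grad_eq[OF Q_c] bracket_lincomb_left bracket_Q_Q by simp
  also have "\<dots> = - poly (next_poly P Q c) y"
    using y Q_c by (simp add: bracket_P_Q_eq poly_next_poly ratio_at_def field_simps)
  finally show "bracket (ratio_grad P dP Q dQ c) (grad_at dQ y) = - poly (next_poly P Q c) y" .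
qed (auto intro!: continuous_intros)

lemma bracket_ratio_grad_P:
  "bracket (ratio_grad P dP Q dQ c) (grad_at dP y) = - ratio_at P Q c * poly (next_poly P Q c) y"
proof (rule isCont_eq_off_point[where F="\<lambda>y. bracket (ratio_grad P dP Q dQ c) (grad_at dP y)"
      and G="\<lambda>y. - ratio_at P Q c * poly (next_poly P Q c) y" and c=c])
  fix y :: real assume y: "y \<noteq> c"
  have "bracket (ratio_grad P dP Q dQ c) (grad_at dP y) =
      poly P c / (poly Q c)^2 * bracket (grad_at dP y) (grad_at dQ c)"
    unfolding ratio_grad_eq[OF Q_c] bracket_lincomb_left bracket_P_P
    using bracket_antisym[of "grad_at dQ c" "grad_at dP y"] by simp
  also have "\<dots> = - ratio_at P Q c * poly (next_poly P Q c) y"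
    using y Q_c by (simp add: bracket_P_Q_eq poly_next_poly ratio_at_def field_simps power2_eq_square)
  finally show "bracket (ratio_grad P dP Q dQ c) (grad_at dP y) =
      - ratio_at P Q c * poly (next_poly P Q c) y" .
qed (auto intro!: continuous_intros)

lemma bracket_ratio_grad_next:
  "bracket (ratio_grad P dP Q dQ c) (grad_at (next_grad P dP Q dQ c) y) = 0"
proof (rule isCont_eq_off_point[where c=c and G="\<lambda>y. 0"
      and F="\<lambda>y. bracket (ratio_grad P dP Q dQ c) (grad_at (next_grad P dP Q dQ c) y)"])
  fix y :: real assume "y \<noteq> c"
  show "bracket (ratio_grad P dP Q dQ c) (grad_at (next_grad P dP Q dQ c) y) = 0"
    unfolding grad_at_next_grad[OF Q_c \<open>y \<noteq> c\<close>] bracket_lincomb3_right bracket_ratio_grad_P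
      bracket_ratio_grad_Q bracket_self
    by (simp add: field_simps)
qed (auto intro!: continuous_intros)

lemma bracket_Q_P: "bracket (grad_at dQ x) (grad_at dP y) = - bracket (grad_at dP x) (grad_at dQ y)"
  using bracket_antisym[of "grad_at dQ x"] bracket_P_Q_swap[of y x] by simp

lemma bracket_P_ratio_grad:
  "bracket (grad_at dP x) (ratio_grad P dP Q dQ c) = ratio_at P Q c * poly (next_poly P Q c) x"
  using bracket_antisym[of "grad_at dP x"] bracket_ratio_grad_P[of x] by simp

lemma bracket_Q_ratio_grad: "bracket (grad_at dQ x) (ratio_grad P dP Q dQ c) = poly (next_poly P Q c) x"
  using bracket_antisym[of "grad_at dQ x"] bracket_ratio_grad_Q[of x] by simp

lemma bracket_next_next:
  "bracket (grad_at (next_grad P dP Q dQ c) x) (grad_at (next_grad P dP Q dQ c) y) = 0"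
proof (rule isCont_eq_off_point2[where c=c and G="\<lambda>x y. 0"
      and F="\<lambda>x y. bracket (grad_at (next_grad P dP Q dQ c) x) (grad_at (next_grad P dP Q dQ c) y)"])
  fix x y :: real assume "x \<noteq> c" "y \<noteq> c"
  show "bracket (grad_at (next_grad P dP Q dQ c) x) (grad_at (next_grad P dP Q dQ c) y) = 0"
    unfolding grad_at_next_grad[OF Q_c \<open>x \<noteq> c\<close>] grad_at_next_grad[OF Q_c \<open>y \<noteq> c\<close>]
      bracket_lincomb3_left bracket_lincomb3_right bracket_P_P bracket_Q_Q bracket_Q_P bracket_self
      bracket_ratio_grad_P bracket_ratio_grad_Q bracket_P_ratio_grad bracket_Q_ratio_grad
    by (simp add: divide_inverse algebra_simps)
qed (auto intro!: continuous_intros)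

lemma bracket_Q_next:
  "(x - y) * bracket (grad_at dQ x) (grad_at (next_grad P dP Q dQ c) y) =
    poly Q y * poly (next_poly P Q c) x - poly Q x * poly (next_poly P Q c) y"
proof (rule isCont_eq_off_point2[where c=c
      and F="\<lambda>x y. (x - y) * bracket (grad_at dQ x) (grad_at (next_grad P dP Q dQ c) y)"
      and G="\<lambda>x y. poly Q y * poly (next_poly P Q c) x - poly Q x * poly (next_poly P Q c) y"])
  fix x y :: real assume x: "x \<noteq> c" and y: "y \<noteq> c"
  define B where "B = bracket (grad_at dQ x) (grad_at (next_grad P dP Q dQ c) y)"
  have B: "(y - c) * B = - bracket (grad_at dP x) (grad_at dQ y) - poly Q y * poly (next_poly P Q c) x"
    using y unfolding B_def grad_at_next_grad[OF Q_c y] bracket_lincomb3_right bracket_Q_Q bracket_Q_P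
      bracket_Q_ratio_grad
    by (simp add: right_diff_distrib)
  have R: "poly (next_poly P Q c) t * (t - c) = poly P t - ratio_at P Q c * poly Q t"
    if "t \<noteq> c" for t
    using that Q_c by (simp add: poly_next_poly)
  have "(y - c) * ((x - y) * B) =
      (y - c) * (poly Q y * poly (next_poly P Q c) x - poly Q x * poly (next_poly P Q c) y)"
    using B bracket_P_Q[of x y] R[OF x] R[OF y] by algebra
  with y show "(x - y) * bracket (grad_at dQ x) (grad_at (next_grad P dP Q dQ c) y) =
      poly Q y * poly (next_poly P Q c) x - poly Q x * poly (next_poly P Q c) y"
    unfolding B_def by simp
qed (auto intro!: continuous_intros)

lemma poisson_pair_next: "poisson_pair Q dQ (next_poly P Q c) (next_grad P dP Q dQ c)"
  unfolding poisson_pair_def using bracket_Q_Q bracket_next_next bracket_Q_next by blast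

lemma bracket_ratio_grad_consecutive:
  assumes "poly (next_poly P Q c) c' \<noteq> 0"
  shows "bracket (ratio_grad P dP Q dQ c)
      (ratio_grad Q dQ (next_poly P Q c) (next_grad P dP Q dQ c) c') = -1"
  unfolding ratio_grad_eq[OF assms] bracket_lincomb_right bracket_ratio_grad_Q bracket_ratio_grad_next
  using assms by simp

lemma bracket_ratio_grad_next_next:
  assumes "poly (next_poly P Q c) c' \<noteq> 0"
  shows "bracket (ratio_grad P dP Q dQ c)
      (grad_at (next_grad Q dQ (next_poly P Q c) (next_grad P dP Q dQ c) c') y) = 0"
proof (rule isCont_eq_off_point[where c=c' and G="\<lambda>y. 0" and F="\<lambda>y. bracket (ratio_grad P dP Q dQ c)
      (grad_at (next_grad Q dQ (next_poly P Q c) (next_grad P dP Q dQ c) c') y)"])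
  fix y assume "y \<noteq> c'"
  show "bracket (ratio_grad P dP Q dQ c)
      (grad_at (next_grad Q dQ (next_poly P Q c) (next_grad P dP Q dQ c) c') y) = 0"
    unfolding grad_at_next_grad[OF assms \<open>y \<noteq> c'\<close>] bracket_lincomb3_right bracket_ratio_grad_Q
      bracket_ratio_grad_next bracket_ratio_grad_consecutive[OF assms]
    by (simp add: field_simps)
qed (auto intro!: continuous_intros)

end

end

section \<open>The initial polynomials B and A\<close>

lemma degree_prod_linear: "degree (\<Prod>i\<in>S. [:- a i, 1:]) = card S" for a :: "'a \<Rightarrow> 'b::idom"
  by (cases "finite S") (simp_all add: degree_prod_eq_sum_degree)

lemma coeff_prod_linear_card: "coeff (\<Prod>i\<in>S. [:- a i, 1:]) (card S) = 1" for a :: "'a \<Rightarrow> 'b::idom"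
  using lead_coeff_prod[of "\<lambda>i. [:- a i, 1:]" S] by (simp add: degree_prod_linear)

definition Bcofactor :: "nat \<Rightarrow> nat \<Rightarrow> (nat \<Rightarrow> real) \<Rightarrow> real \<Rightarrow> nat \<Rightarrow> real poly" where
  "Bcofactor N g lam v k = smult (bzero N g v) (\<Prod>i\<in>{1..g}-{k}. [:- lam i, 1:])"

lemma Bpoly_eq_linear_mult_Bcofactor:
  assumes "k \<in> {1..g}"
  shows "Bpoly N g lam v = [:- lam k, 1:] * Bcofactor N g lam v k"
proof -
  have "(\<Prod>i\<in>{1..g}. [:- lam i, 1:]) = [:- lam k, 1:] * (\<Prod>i\<in>{1..g}-{k}. [:- lam i, 1:])"
    by (rule prod.remove) (use assms in auto)
  then show ?thesis
    unfolding Bpoly_def Bcofactor_def by (simp only: mult_smult_right)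
qed

lemma Bpoly_div_linear:
  assumes "k \<in> {1..g}"
  shows "Bpoly N g lam v div [:- lam k, 1:] = Bcofactor N g lam v k"
  unfolding Bpoly_eq_linear_mult_Bcofactor[OF assms] by (rule nonzero_mult_div_cancel_left) simp

lemma Bcofactor_fun_upd: "Bcofactor N g (lam(j := t)) v j = Bcofactor N g lam v j"
  unfolding Bcofactor_def by (intro arg_cong[where f="smult _"] prod.cong) auto

lemma Apoly_eq:
  "Apoly N g lam z v = smult (azero N g / bzero N g v) (Bpoly N g lam v)
     + (\<Sum>k\<in>{1..g}. smult (z k / (Bder N g lam v k * lam k)) (Bcofactor N g lam v k))"
  unfolding Apoly_def by (simp add: Bpoly_div_linear)

lemma poly_Bpoly_root: "k \<in> {1..g} \<Longrightarrow> poly (Bpoly N g lam v) (lam k) = 0"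
  by (simp add: Bpoly_eq_linear_mult_Bcofactor)

lemma poly_Bcofactor_root:
  "k \<in> {1..g} \<Longrightarrow> i \<in> {1..g} \<Longrightarrow>
    poly (Bcofactor N g lam v i) (lam k) = (if i = k then Bder N g lam v k else 0)"
  unfolding Bcofactor_def Bder_def by (auto simp: poly_prod)

lemma Bder_nonzero:
  assumes "inj_on lam {1..g}" and "bzero N g v \<noteq> 0" and "k \<in> {1..g}"
  shows "Bder N g lam v k \<noteq> 0"
  using assms inj_onD[OF assms(1), of k] unfolding Bder_def by (auto simp: prod_zero_iff)

lemma poly_Apoly_root:
  assumes "inj_on lam {1..g}" and "bzero N g v \<noteq> 0" and "k \<in> {1..g}"
  shows "poly (Apoly N g lam z v) (lam k) = z k / lam k"
proof -
  have "poly (Apoly N g lam z v) (lam k) =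
      (\<Sum>i\<in>{1..g}. z i / (Bder N g lam v i * lam i) * (if i = k then Bder N g lam v k else 0))"
    unfolding Apoly_eq using assms(3) by (simp add: poly_sum poly_Bpoly_root poly_Bcofactor_root)
  also have "\<dots> = z k / (Bder N g lam v k * lam k) * Bder N g lam v k"
    using assms(3) by (simp add: if_distrib sum.delta cong: if_cong)
  also have "\<dots> = z k / lam k"
    using Bder_nonzero[OF assms] by simp
  finally show ?thesis .
qed

lemma coeff_Apoly_top:
  assumes "g \<le> i" and "bzero N g v \<noteq> 0"
  shows "coeff (Apoly N g lam z v) i = (if i = g then azero N g else 0)"
proof -
  have "coeff (Bcofactor N g lam v k) i = 0" if "k \<in> {1..g}" for k
  proof -
    have "degree (\<Prod>i\<in>{1..g}-{k}. [:- lam i, 1:]) < i"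
      using that assms(1) degree_prod_linear[of lam "{1..g}-{k}"] by auto
    then show ?thesis unfolding Bcofactor_def by (simp add: coeff_eq_0)
  qed
  moreover have "coeff (Bpoly N g lam v) i = (if i = g then bzero N g v else 0)"
    using assms(1) degree_prod_linear[of lam "{1..g}"] coeff_prod_linear_card[of lam "{1..g}"]
    unfolding Bpoly_def by (auto simp: coeff_eq_0)
  ultimately show ?thesis
    unfolding Apoly_eq using assms(2) by (simp add: coeff_sum)
qed

lemma has_poly_derivative_Bpoly_lam:
  assumes "j \<in> {1..g}"
  shows "((\<lambda>t. Bpoly N g (lam(j := t)) v) has_poly_derivative - Bcofactor N g lam v j) x"
proof -
  have "Bpoly N g (lam(j := t)) v = [:- t, 1:] * Bcofactor N g lam v j" for t
    using Bpoly_eq_linear_mult_Bcofactor[OF assms, of N "lam(j := t)" v] Bcofactor_fun_upd by simp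
  then show ?thesis
    using has_poly_derivative_mult[OF has_poly_derivative_linear
        has_poly_derivative_const[of "Bcofactor N g lam v j"]]
    by simp
qed

lemma has_poly_derivative_Apoly_z:
  assumes "j \<in> {1..g}"
  shows "((\<lambda>t. Apoly N g lam (z(j := t)) v) has_poly_derivative
    smult (1 / (Bder N g lam v j * lam j)) (Bcofactor N g lam v j)) x"
proof -
  define d where "d k = Bder N g lam v k * lam k" for k
  have "((\<lambda>t. (z(j := t)) k / d k) has_real_derivative (if k = j then 1 / d k else 0)) (at x)" for k
    by (cases "k = j") (use DERIV_cdivide[OF DERIV_ident, where c="d j"] in auto)
  then have "((\<lambda>t. Apoly N g lam (z(j := t)) v) has_poly_derivative
      0 + (\<Sum>k\<in>{1..g}. smult (if k = j then 1 / d k else 0) (Bcofactor N g lam v k)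
        + smult ((z(j := x)) k / d k) 0)) x"
    unfolding Apoly_eq d_def[symmetric]
    by (intro has_poly_derivative_add has_poly_derivative_const has_poly_derivative_sum
        has_poly_derivative_smult) auto
  then show ?thesis
    using assms by (simp add: d_def if_distrib[of "\<lambda>c. smult c _"] sum.delta cong: if_cong)
qed

lemma fun_upd_has_real_derivative:
  "((\<lambda>t. (f(j := t)) i) has_real_derivative (if i = j then 1 else 0)) (at x)" for f :: "'a \<Rightarrow> real"
  by (cases "i = j") (auto intro!: derivative_eq_intros)

lemma has_real_derivative_Bder_lam:
  "\<exists>D. ((\<lambda>t. Bder N g (lam(j := t)) v k) has_real_derivative D) (at x)"
proof -
  have "((\<lambda>t. \<Prod>i\<in>{1..g}-{k}. (lam(j := t)) k - (lam(j := t)) i) has_real_derivative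
      (\<Sum>i\<in>{1..g}-{k}. ((if k = j then 1 else 0) - (if i = j then 1 else 0)) *
        (\<Prod>y\<in>{1..g}-{k}-{i}. (lam(j := x)) k - (lam(j := x)) y))) (at x)"
    by (rule has_field_derivative_prod) (intro DERIV_diff fun_upd_has_real_derivative)
  then show ?thesis
    unfolding Bder_def using DERIV_cmult by blast
qed

lemma has_poly_derivative_Bcofactor_lam:
  "\<exists>q. ((\<lambda>t. Bcofactor N g (lam(j := t)) v k) has_poly_derivative q) x"
proof -
  have factor: "((\<lambda>t. [:- (lam(j := t)) i, 1:]) has_poly_derivative (if i = j then [:-1:] else 0)) x"
    for i
    by (cases "i = j") (auto simp: has_poly_derivative_linear has_poly_derivative_const)
  have "\<exists>q. ((\<lambda>t. \<Prod>i\<in>{1..g}-{k}. [:- (lam(j := t)) i, 1:]) has_poly_derivative q) x"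
    by (rule has_poly_derivative_prod[where p="\<lambda>i. if i = j then [:-1:] else 0"]) (simp, rule factor)
  then show ?thesis
    unfolding Bcofactor_def using has_poly_derivative_cmult by blast
qed

lemma has_poly_derivative_Apoly_lam_exists:
  assumes inj: "inj_on lam {1..g}" and nz: "\<forall>i\<in>{1..g}. lam i \<noteq> 0"
    and b0: "bzero N g v \<noteq> 0" and j: "j \<in> {1..g}"
  shows "\<exists>D. ((\<lambda>t. Apoly N g (lam(j := t)) z v) has_poly_derivative D) (lam j)"
proof -
  define w where "w k t = z k / (Bder N g (lam(j := t)) v k * (lam(j := t)) k)" for k t
  have "\<exists>p. ((\<lambda>t. smult (w k t) (Bcofactor N g (lam(j := t)) v k)) has_poly_derivative p) (lam j)"
    if k: "k \<in> {1..g}" for k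
  proof -
    obtain DB where DB: "((\<lambda>t. Bder N g (lam(j := t)) v k) has_real_derivative DB) (at (lam j))"
      using has_real_derivative_Bder_lam by blast
    have "Bder N g (lam(j := lam j)) v k * (lam(j := lam j)) k \<noteq> 0"
      using Bder_nonzero[OF inj b0 k] nz k by simp
    note DERIV_divide[OF DERIV_const DERIV_mult[OF DB fun_upd_has_real_derivative] this]
    then obtain D where D: "(w k has_real_derivative D) (at (lam j))"
      unfolding w_def by blast
    obtain q where q: "((\<lambda>t. Bcofactor N g (lam(j := t)) v k) has_poly_derivative q) (lam j)"
      using has_poly_derivative_Bcofactor_lam by blast
    show ?thesis
      using has_poly_derivative_smult[OF D q] by blast
  qed
  then obtain p where
    "((\<lambda>t. smult (w k t) (Bcofactor N g (lam(j := t)) v k)) has_poly_derivative p k) (lam j)"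
    if "k \<in> {1..g}" for k
    by metis
  then have "((\<lambda>t. Apoly N g (lam(j := t)) z v) has_poly_derivative
      smult (azero N g / bzero N g v) (- Bcofactor N g lam v j) + (\<Sum>k\<in>{1..g}. p k)) (lam j)"
    unfolding Apoly_eq w_def[symmetric]
    by (intro has_poly_derivative_add has_poly_derivative_cmult has_poly_derivative_sum
        has_poly_derivative_Bpoly_lam[OF j]) auto
  then show ?thesis by blast
qed

lemma Apoly_lam_derivative_root:
  assumes inj: "inj_on lam {1..g}" and b0: "bzero N g v \<noteq> 0" and j: "j \<in> {1..g}"
    and D: "((\<lambda>t. Apoly N g (lam(j := t)) z v) has_poly_derivative D) (lam j)"
    and k: "k \<in> {1..g} - {j}"
  shows "poly D (lam k) = 0"
proof -
  define S where "S = - lam ` ({1..g} - {j})"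
  have "open S"
    unfolding S_def by (intro open_Compl finite_imp_closed) auto
  moreover have "lam j \<in> S"
    using inj_on_image_mem_iff[OF inj, of j "{1..g} - {j}"] j unfolding S_def by auto
  moreover have "poly (Apoly N g (lam(j := t)) z v) (lam k) = z k / lam k" if "t \<in> S" for t
  proof -
    have "inj_on (lam(j := t)) ({1..g} - {j}) = inj_on lam ({1..g} - {j})"
      by (rule inj_on_cong) auto
    then have "inj_on (lam(j := t)) ({1..g} - {j})"
      using inj_on_subset[OF inj, of "{1..g} - {j}"] by blast
    moreover have "(lam(j := t)) ` ({1..g} - {j}) = lam ` ({1..g} - {j})"
      by (rule image_cong) auto
    ultimately have "inj_on (lam(j := t)) (insert j ({1..g} - {j}))"
      using that unfolding S_def inj_on_insert by (metis ComplD Diff_idemp fun_upd_same)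
    then have "inj_on (lam(j := t)) {1..g}"
      using j by (simp add: insert_absorb)
    then have "poly (Apoly N g (lam(j := t)) z v) ((lam(j := t)) k) = z k / (lam(j := t)) k"
      by (rule poly_Apoly_root) (use b0 k in auto)
    then show ?thesis
      using k by simp
  qed
  ultimately have "((\<lambda>t. z k / lam k) has_real_derivative poly D (lam k)) (at (lam j))"
    by (intro has_field_derivative_transform_within_open[OF poly_has_real_derivative[OF D]]) auto
  then show ?thesis
    using DERIV_const DERIV_unique by blast
qed

lemma Apoly_lam_derivative_degree:
  assumes b0: "bzero N g v \<noteq> 0"
    and D: "((\<lambda>t. Apoly N g (lam(j := t)) z v) has_poly_derivative D) x"
  shows "degree D \<le> g - 1"
proof (rule degree_le, intro allI impI)
  fix i assume "g - 1 < i"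
  then have "((\<lambda>t. if i = g then azero N g else 0) has_real_derivative coeff D i) (at x)"
    using has_poly_derivative_coeff[OF D, of i] by (simp add: coeff_Apoly_top[OF _ b0])
  then show "coeff D i = 0"
    using DERIV_const DERIV_unique by blast
qed

lemma has_poly_derivative_Apoly_lam:
  assumes inj: "inj_on lam {1..g}" and "\<forall>i\<in>{1..g}. lam i \<noteq> 0"
    and b0: "bzero N g v \<noteq> 0" and j: "j \<in> {1..g}"
  shows "\<exists>K. ((\<lambda>t. Apoly N g (lam(j := t)) z v) has_poly_derivative
    smult K (Bcofactor N g lam v j)) (lam j)"
proof -
  obtain D where D: "((\<lambda>t. Apoly N g (lam(j := t)) z v) has_poly_derivative D) (lam j)"
    using has_poly_derivative_Apoly_lam_exists[OF assms] by blast
  \<comment> \<open>A(lam k) = z k / lam k and the top coefficient of A do not depend on lam j, so D has degree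
    below g and vanishes at the other g - 1 roots of B.\<close>
  define C where "C = (\<Prod>i\<in>{1..g}-{j}. [:- lam i, 1:])"
  have "D = smult (coeff D (g - 1)) C"
  proof (rule poly_eqI_degree_lead_coeff[where n="g - 1" and A="lam ` ({1..g} - {j})"])
    show "coeff D (g - 1) = coeff (smult (coeff D (g - 1)) C) (g - 1)"
      using coeff_prod_linear_card[of lam "{1..g}-{j}"] j unfolding C_def by simp
    show "g - 1 \<le> card (lam ` ({1..g} - {j}))"
      using card_image[OF inj_on_subset[OF inj, of "{1..g}-{j}"]] j by simp
    show "degree (smult (coeff D (g - 1)) C) \<le> g - 1"
      using degree_prod_linear[of lam "{1..g}-{j}"] j unfolding C_def by (simp add: degree_smult_le)
    show "poly D s = poly (smult (coeff D (g - 1)) C) s" if "s \<in> lam ` ({1..g} - {j})" for s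
    proof -
      from that obtain k where k: "k \<in> {1..g} - {j}" "s = lam k" by blast
      then have "poly C s = 0"
        unfolding C_def by (auto simp: poly_prod prod_zero_iff)
      with k show ?thesis using Apoly_lam_derivative_root[OF inj b0 j D k(1)] by simp
    qed
  qed (rule Apoly_lam_derivative_degree[OF b0 D])
  then have "D = smult (coeff D (g - 1) / bzero N g v) (Bcofactor N g lam v j)"
    unfolding Bcofactor_def C_def using b0 by simp
  with D show ?thesis
    by (intro exI[of _ "coeff D (g - 1) / bzero N g v"]) simp
qed

section \<open>Degrees of the F m\<close>

lemma FF_Suc_Suc:
  "1 \<le> m \<Longrightarrow> FF N g al lam z v (Suc (Suc m)) =
    next_poly (FF N g al lam z v m) (FF N g al lam z v (Suc m)) (- beta al m)"
  by (cases m) (simp_all add: next_poly_def ratio_at_def Let_def)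

lemma fcoef_eq_ratio_at:
  "fcoef N g al lam z v m = ratio_at (FF N g al lam z v m) (FF N g al lam z v (Suc m)) (- beta al m)"
  unfolding fcoef_def ratio_at_def ..

lemma FF_Suc_Suc_degree:
  assumes "1 \<le> m" and "degree (FF N g al lam z v m) \<le> Suc d" and "degree (FF N g al lam z v (Suc m)) \<le> Suc d"
  shows "degree (FF N g al lam z v (Suc (Suc m))) \<le> d"
    and "coeff (FF N g al lam z v (Suc (Suc m))) d =
      coeff (FF N g al lam z v m) (Suc d) - fcoef N g al lam z v m * coeff (FF N g al lam z v (Suc m)) (Suc d)"
proof -
  define S where "S = FF N g al lam z v m - smult (fcoef N g al lam z v m) (FF N g al lam z v (Suc m))"
  have S: "degree S \<le> Suc d"
    unfolding S_def using assms(2,3) by (intro degree_diff_le) (auto intro: order.trans[OF degree_smult_le])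
  obtain c where FF: "FF N g al lam z v (Suc (Suc m)) = S div [:- c, 1:]"
    unfolding S_def FF_Suc_Suc[OF assms(1)] next_poly_def fcoef_eq_ratio_at by blast
  show "degree (FF N g al lam z v (Suc (Suc m))) \<le> d"
    unfolding FF by (rule degree_div_linear_le[OF S])
  show "coeff (FF N g al lam z v (Suc (Suc m))) d =
      coeff (FF N g al lam z v m) (Suc d) - fcoef N g al lam z v m * coeff (FF N g al lam z v (Suc m)) (Suc d)"
    using coeff_div_linear_top[OF S, of c] unfolding FF S_def by simp
qed

lemma degree_coeff_Bpoly: "degree (Bpoly N g lam v) \<le> g" "coeff (Bpoly N g lam v) g = bzero N g v"
  unfolding Bpoly_def
  using degree_prod_linear[of lam "{1..g}"] coeff_prod_linear_card[of lam "{1..g}"]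
  by (auto intro: order.trans[OF degree_smult_le])

lemma degree_Apoly_le:
  assumes "bzero N g v \<noteq> 0" and "azero N g = 0 \<or> n = g" and "g \<le> Suc n"
  shows "degree (Apoly N g lam z v) \<le> n"
  by (rule degree_le) (use assms coeff_Apoly_top[OF _ assms(1)] in auto)

lemma degree_coeff_FF_odd:
  assumes "N = 2 * g + 1" and "i \<le> g"
  shows "degree (FF N g al lam z v (2 * i + 1)) \<le> g - i \<and> coeff (FF N g al lam z v (2 * i + 1)) (g - i) = 1
    \<and> (i < g \<longrightarrow> degree (FF N g al lam z v (2 * i + 2)) \<le> g - i - 1)"
  using assms(2)
proof (induction i)
  case 0
  have "bzero N g v = 1" "azero N g = 0"
    unfolding bzero_def azero_def using assms(1) by auto
  then show ?case
    using degree_coeff_Bpoly[of N g lam v] degree_Apoly_le[of N g v "g - 1" lam z]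
    by (simp add: numeral_2_eq_2)
next
  case (Suc i)
  then have IH: "degree (FF N g al lam z v (2 * i + 1)) \<le> Suc (g - i - 1)"
      "coeff (FF N g al lam z v (2 * i + 1)) (Suc (g - i - 1)) = 1"
      "degree (FF N g al lam z v (Suc (2 * i + 1))) \<le> g - i - 1"
    by (simp_all add: Suc_diff_Suc)
  then have deg: "degree (FF N g al lam z v (Suc (2 * i + 1))) \<le> Suc (g - i - 1)"
    by simp
  have F3: "degree (FF N g al lam z v (2 * Suc i + 1)) \<le> g - Suc i"
    "coeff (FF N g al lam z v (2 * Suc i + 1)) (g - Suc i) = 1"
    using FF_Suc_Suc_degree[OF _ IH(1) deg] IH(2,3) by (simp_all add: coeff_eq_0)
  have "degree (FF N g al lam z v (2 * Suc i + 2)) \<le> g - Suc i - 1" if "Suc i < g"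
    using FF_Suc_Suc_degree(1)[of "Suc (2 * i + 1)" N g al lam z v "g - Suc i - 1"] IH(3) F3(1) that
    by (simp add: Suc_diff_Suc)
  with F3 show ?case by simp
qed

lemma degree_coeff_FF_even:
  assumes "N = 2 * g + 2" and "v \<noteq> 0" and "i \<le> g"
  shows "degree (FF N g al lam z v (2 * i + 1)) \<le> g - i
    \<and> coeff (FF N g al lam z v (2 * i + 1)) (g - i) =
        v - (\<Sum>l\<in>{l\<in>{1..2 * i}. odd l}. fcoef N g al lam z v l)
    \<and> degree (FF N g al lam z v (2 * i + 2)) \<le> g - i \<and> coeff (FF N g al lam z v (2 * i + 2)) (g - i) = 1"
  using assms(3)
proof (induction i)
  case 0
  have "bzero N g v = v" "azero N g = 1"
    unfolding bzero_def azero_def using assms(1) by auto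
  then show ?case
    using assms(2) degree_coeff_Bpoly[of N g lam v] degree_Apoly_le[of N g v g lam z]
      coeff_Apoly_top[of g g N v lam z]
    by (simp add: numeral_2_eq_2)
next
  case (Suc i)
  define S where "S i = (\<Sum>l\<in>{l\<in>{1..2 * i}. odd l}. fcoef N g al lam z v l)" for i
  from Suc have IH: "degree (FF N g al lam z v (2 * i + 1)) \<le> Suc (g - i - 1)"
      "coeff (FF N g al lam z v (2 * i + 1)) (Suc (g - i - 1)) = v - S i"
      "degree (FF N g al lam z v (Suc (2 * i + 1))) \<le> Suc (g - i - 1)"
      "coeff (FF N g al lam z v (Suc (2 * i + 1))) (Suc (g - i - 1)) = 1"
    by (simp_all add: Suc_diff_Suc S_def)
  have F3: "degree (FF N g al lam z v (2 * Suc i + 1)) \<le> g - Suc i"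
    "coeff (FF N g al lam z v (2 * Suc i + 1)) (g - Suc i) = v - S i - fcoef N g al lam z v (2 * i + 1)"
    using FF_Suc_Suc_degree[OF _ IH(1,3)] IH(2,4) by simp_all
  have "degree (FF N g al lam z v (2 * Suc i + 2)) \<le> g - Suc i"
    "coeff (FF N g al lam z v (2 * Suc i + 2)) (g - Suc i) = 1"
    using FF_Suc_Suc_degree[of "Suc (2 * i + 1)" N g al lam z v "g - Suc i"] IH(3,4) F3(1)
    by (simp_all add: coeff_eq_0 Suc_diff_Suc)
  moreover have "{l\<in>{1..2 * Suc i}. odd l} = insert (2 * i + 1) {l\<in>{1..2 * i}. odd l}"
    by auto presburger+
  then have "S (Suc i) = S i + fcoef N g al lam z v (2 * i + 1)"
    unfolding S_def by simp
  ultimately show ?case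
    using F3 unfolding S_def by (simp add: algebra_simps)
qed

lemma poly_FF_N_0:
  assumes "N = 2 * g + 1 \<or> N = 2 * g + 2" and "bzero N g v \<noteq> 0"
  shows "poly (FF N g al lam z v N) 0 = 1"
proof (cases "N = 2 * g + 1")
  case True
  then show ?thesis
    using degree_coeff_FF_odd[OF True order.refl, of al lam z v] by (simp add: poly_0_coeff_0)
next
  case False
  with assms have "N = 2 * g + 2" "v \<noteq> 0"
    unfolding bzero_def by auto
  then show ?thesis
    using degree_coeff_FF_even[OF _ _ order.refl, of N g v al lam z] by (simp add: poly_0_coeff_0)
qed

lemma sum_Phi:
  assumes "2 \<le> N"
  shows "(\<Sum>i\<in>{1..N}. Phi N g al lam z v i) = 2 * v"
proof -
  have "{1..N} = insert N (insert (N - 1) {1..N - 2})" "N \<notin> insert (N - 1) {1..N - 2}"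
    "N - 1 \<notin> {1..N - 2}"
    using assms by auto
  then have "(\<Sum>i\<in>{1..N}. Phi N g al lam z v i) =
      Phi N g al lam z v N + (Phi N g al lam z v (N - 1) + (\<Sum>i\<in>{1..N - 2}. Phi N g al lam z v i))"
    using assms by simp
  moreover have "(\<Sum>i\<in>{1..N - 2}. Phi N g al lam z v i) = (\<Sum>i\<in>{1..N - 2}. fcoef N g al lam z v i)"
    by (rule sum.cong) (simp_all add: Phi_def)
  moreover have "\<not> N - 1 \<le> N - 2" "\<not> N \<le> N - 2" "N \<noteq> N - 1"
    using assms by auto
  then have "Phi N g al lam z v (N - 1) = coeff (FF N g al lam z v (N - 1)) 0"
    and "Phi N g al lam z v N = 2 * v - ((\<Sum>i\<in>{1..N - 2}. fcoef N g al lam z v i)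
      + coeff (FF N g al lam z v (N - 1)) 0)"
    by (simp_all add: Phi_def)
  ultimately show ?thesis
    by simp
qed

lemma Phi_N_eq:
  assumes "2 \<le> N"
  shows "Phi N g al lam z v N = 2 * v - (\<Sum>i\<in>{1..N - 1}. Phi N g al lam z v i)"
proof -
  have "{1..N} = insert N {1..N - 1}" "N \<notin> {1..N - 1}"
    using assms by auto
  then show ?thesis
    using sum_Phi[OF assms, of g al lam z v] by simp
qed

lemma sum_odd_Phi:
  assumes "N = 2 * g + 2" and "v \<noteq> 0"
  shows "(\<Sum>i\<in>{i\<in>{1..N}. odd i}. Phi N g al lam z v i) = v"
proof -
  have "{i\<in>{1..N}. odd i} = insert (N - 1) {i\<in>{1..N - 2}. odd i}"
    using assms(1) by (auto; presburger)
  then have "(\<Sum>i\<in>{i\<in>{1..N}. odd i}. Phi N g al lam z v i) =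
      Phi N g al lam z v (N - 1) + (\<Sum>i\<in>{i\<in>{1..N - 2}. odd i}. Phi N g al lam z v i)"
    using assms(1) by simp
  moreover have "(\<Sum>i\<in>{i\<in>{1..N - 2}. odd i}. Phi N g al lam z v i) =
      (\<Sum>i\<in>{i\<in>{1..N - 2}. odd i}. fcoef N g al lam z v i)"
    by (rule sum.cong) (simp_all add: Phi_def)
  moreover have "Phi N g al lam z v (N - 1) = v - (\<Sum>i\<in>{i\<in>{1..N - 2}. odd i}. fcoef N g al lam z v i)"
    using degree_coeff_FF_even[OF assms order.refl, of al lam z] assms(1)
    by (simp add: Phi_def poly_0_coeff_0)
  ultimately show ?thesis
    by simp
qed

lemma sum_odd_Phi_eq_sum_even_Phi:
  assumes "N = 2 * g + 2" and "v \<noteq> 0"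
  shows "(\<Sum>i\<in>{i\<in>{1..N}. odd i}. Phi N g al lam z v i) =
    (\<Sum>i\<in>{i\<in>{1..N}. even i}. Phi N g al lam z v i)"
proof -
  have "(\<Sum>i\<in>{1..N}. Phi N g al lam z v i) =
      (\<Sum>i\<in>{1..N}. if odd i then Phi N g al lam z v i else 0)
      + (\<Sum>i\<in>{1..N}. if even i then Phi N g al lam z v i else 0)"
    unfolding sum.distrib[symmetric] by (rule sum.cong) auto
  also have "\<dots> = (\<Sum>i\<in>{i\<in>{1..N}. odd i}. Phi N g al lam z v i)
      + (\<Sum>i\<in>{i\<in>{1..N}. even i}. Phi N g al lam z v i)"
    by (simp only: sum.inter_filter[OF finite_atLeastAtMost])
  finally show ?thesis
    using sum_Phi[of N g al lam z v] sum_odd_Phi[OF assms, of al lam z] assms(1) by simp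
qed

lemma tgtPB_antisym: "tgtPB N n m = - tgtPB N m n"
  unfolding tgtPB_def by simp

lemma sum_tgtPB:
  assumes "m \<in> {1..N}"
  shows "(\<Sum>n\<in>{1..N}. tgtPB N m n) = 0"
proof -
  define prev where "prev = (if m = 1 then N else m - 1)"
  have "(\<Sum>n\<in>{1..N}. if n = cnext N m then -1 else 0) = (-1 :: real)"
    using assms by (simp add: cnext_def)
  moreover have "(\<Sum>n\<in>{1..N}. if m = cnext N n then 1 else 0) =
      (\<Sum>n\<in>{1..N}. if n = prev then 1 else (0::real))"
    using assms by (intro sum.cong) (auto simp: cnext_def prev_def)
  moreover have "prev \<in> {1..N}"
    using assms by (auto simp: prev_def)
  ultimately show ?thesis
    unfolding tgtPB_def sum.distrib by simp
qed

section \<open>Gradients of the F m and of Phi\<close>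

context
  fixes N g :: nat and al lam z :: "nat \<Rightarrow> real" and v :: real
begin

abbreviation Fpoly :: "nat \<Rightarrow> real poly" where
  "Fpoly \<equiv> FF N g al lam z v"

definition lam_along :: "nat \<Rightarrow> bool \<Rightarrow> real \<Rightarrow> nat \<Rightarrow> real" where
  "lam_along j b t = (if b then lam(j := t) else lam)"

definition z_along :: "nat \<Rightarrow> bool \<Rightarrow> real \<Rightarrow> nat \<Rightarrow> real" where
  "z_along j b t = (if b then z else z(j := t))"

definition coord :: "nat \<Rightarrow> bool \<Rightarrow> real" where
  "coord j b = (if b then lam j else z j)"

definition FF_along :: "nat \<Rightarrow> nat \<Rightarrow> bool \<Rightarrow> real \<Rightarrow> real poly" where
  "FF_along m j b = (\<lambda>t. FF N g al (lam_along j b t) (z_along j b t) v m)"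

definition FF_grad :: "nat \<Rightarrow> poly_grad" where
  "FF_grad m = (\<lambda>j b. if j \<in> {1..g} then SOME p. (FF_along m j b has_poly_derivative p) (coord j b) else 0)"

definition FF_differentiable :: "nat \<Rightarrow> bool" where
  "FF_differentiable m \<longleftrightarrow>
     (\<forall>j\<in>{1..g}. \<forall>b. (FF_along m j b has_poly_derivative FF_grad m j b) (coord j b))"

lemma along_coord: "lam_along j b (coord j b) = lam" "z_along j b (coord j b) = z"
  unfolding lam_along_def z_along_def coord_def by auto

lemma FF_along_coord: "FF_along m j b (coord j b) = Fpoly m"
  unfolding FF_along_def along_coord ..

lemma FF_grad_eqI:
  "j \<in> {1..g} \<Longrightarrow> (FF_along m j b has_poly_derivative p) (coord j b) \<Longrightarrow> FF_grad m j b = p"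
  unfolding FF_grad_def by (auto intro: some_equality has_poly_derivative_unique)

lemma FF_grad_outside: "j \<notin> {1..g} \<Longrightarrow> FF_grad m j b = 0"
  unfolding FF_grad_def by auto

lemma FF_differentiableI:
  assumes "\<And>j b. j \<in> {1..g} \<Longrightarrow> \<exists>p. (FF_along m j b has_poly_derivative p) (coord j b)"
  shows "FF_differentiable m"
  unfolding FF_differentiable_def using assms FF_grad_eqI by metis

lemma FF_grad_1:
  "j \<in> {1..g} \<Longrightarrow> FF_grad (Suc 0) j b = (if b then - Bcofactor N g lam v j else 0)"
  by (rule FF_grad_eqI)
    (auto simp: FF_along_def lam_along_def z_along_def coord_def
      has_poly_derivative_Bpoly_lam has_poly_derivative_const)

lemma FF_grad_2_z:
  "j \<in> {1..g} \<Longrightarrow> FF_grad 2 j False = smult (1 / (Bder N g lam v j * lam j)) (Bcofactor N g lam v j)"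
  by (rule FF_grad_eqI)
    (simp_all add: FF_along_def lam_along_def z_along_def coord_def numeral_2_eq_2
      has_poly_derivative_Apoly_z)

lemma FF_grad_2_lam:
  assumes "inj_on lam {1..g}" and "\<forall>i\<in>{1..g}. lam i \<noteq> 0" and "bzero N g v \<noteq> 0" and "j \<in> {1..g}"
  shows "\<exists>K. FF_grad 2 j True = smult K (Bcofactor N g lam v j)"
  using has_poly_derivative_Apoly_lam[OF assms, of z] FF_grad_eqI[OF assms(4), of 2 True]
  by (auto simp: FF_along_def lam_along_def z_along_def coord_def numeral_2_eq_2)

lemma FF_differentiable_1: "FF_differentiable (Suc 0)"
  unfolding FF_differentiable_def
  by (auto simp: FF_grad_1 FF_along_def lam_along_def z_along_def coord_def
      has_poly_derivative_Bpoly_lam has_poly_derivative_const)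

lemma FF_differentiable_2:
  assumes "inj_on lam {1..g}" and "\<forall>i\<in>{1..g}. lam i \<noteq> 0" and "bzero N g v \<noteq> 0"
  shows "FF_differentiable 2"
proof (rule FF_differentiableI)
  fix j b assume j: "j \<in> {1..g}"
  show "\<exists>p. (FF_along 2 j b has_poly_derivative p) (coord j b)"
  proof (cases b)
    case True
    then show ?thesis
      using has_poly_derivative_Apoly_lam[OF assms j, of z]
      by (auto simp: FF_along_def lam_along_def z_along_def coord_def numeral_2_eq_2)
  next
    case False
    then show ?thesis
      by (simp add: FF_along_def lam_along_def z_along_def coord_def numeral_2_eq_2)
        (blast intro: has_poly_derivative_Apoly_z[OF j])
  qed
qed

lemma poisson_pair_1_2:
  assumes "inj_on lam {1..g}" and "\<forall>i\<in>{1..g}. lam i \<noteq> 0" and "bzero N g v \<noteq> 0"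
  shows "poisson_pair g z (Fpoly (Suc 0)) (FF_grad (Suc 0)) (Fpoly 2) (FF_grad 2)"
proof -
  define C where "C = Bcofactor N g lam v"
  define a where "a j = 1 / (Bder N g lam v j * lam j)" for j
  obtain K where K: "\<And>j. j \<in> {1..g} \<Longrightarrow> FF_grad 2 j True = smult (K j) (C j)"
    using FF_grad_2_lam[OF assms] unfolding C_def by metis
  have grad1: "FF_grad (Suc 0) j b = (if b then - C j else 0)" if "j \<in> {1..g}" for j b
    using FF_grad_1[OF that] unfolding C_def .
  have grad2: "FF_grad 2 j False = smult (a j) (C j)" if "j \<in> {1..g}" for j
    using FF_grad_2_z[OF that] unfolding C_def a_def .
  have "bracket g z (grad_at (FF_grad (Suc 0)) x) (grad_at (FF_grad (Suc 0)) y) = 0" for x y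
    unfolding bracket_def grad_at_def by (rule sum.neutral) (simp add: grad1)
  moreover have "bracket g z (grad_at (FF_grad 2) x) (grad_at (FF_grad 2) y) = 0" for x y
    unfolding bracket_def grad_at_def by (rule sum.neutral) (simp add: K grad2)
  moreover have "(x - y) * bracket g z (grad_at (FF_grad (Suc 0)) x) (grad_at (FF_grad 2) y) =
      poly (Fpoly (Suc 0)) y * poly (Fpoly 2) x - poly (Fpoly (Suc 0)) x * poly (Fpoly 2) y" for x y
  proof -
    have split: "poly (Bpoly N g lam v) t = (t - lam k) * poly (C k) t" if "k \<in> {1..g}" for k t
      unfolding Bpoly_eq_linear_mult_Bcofactor[OF that] C_def by (simp add: algebra_simps)
    have "poly (Bpoly N g lam v) y * poly (Apoly N g lam z v) x
        - poly (Bpoly N g lam v) x * poly (Apoly N g lam z v) y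
        = (\<Sum>k\<in>{1..g}. z k * a k * (poly (Bpoly N g lam v) y * poly (C k) x
            - poly (Bpoly N g lam v) x * poly (C k) y))"
      unfolding Apoly_eq C_def[symmetric] a_def
      by (simp add: poly_sum algebra_simps sum_distrib_left sum_subtractf[symmetric])
    also have "\<dots> = (x - y) * (\<Sum>k\<in>{1..g}. z k * (- poly (C k) x * (a k * poly (C k) y)))"
      unfolding sum_distrib_left by (rule sum.cong) (simp_all add: split algebra_simps)
    also have "\<dots> = (x - y) * bracket g z (grad_at (FF_grad (Suc 0)) x) (grad_at (FF_grad 2) y)"
      unfolding bracket_def grad_at_def by (intro arg_cong[where f="(*) _"] sum.cong) (simp_all add: grad1 grad2)
    finally show ?thesis by (simp add: numeral_2_eq_2)
  qed
  ultimately show ?thesis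
    unfolding poisson_pair_def by blast
qed

lemma has_real_derivative_fcoef_along:
  assumes "FF_differentiable m" and "FF_differentiable (Suc m)"
    and "poly (Fpoly (Suc m)) (- beta al m) \<noteq> 0" and "j \<in> {1..g}"
  shows "((\<lambda>t. fcoef N g al (lam_along j b t) (z_along j b t) v m) has_real_derivative
    ratio_grad (Fpoly m) (FF_grad m) (Fpoly (Suc m)) (FF_grad (Suc m)) (- beta al m) j b) (at (coord j b))"
proof -
  have "(\<lambda>t. fcoef N g al (lam_along j b t) (z_along j b t) v m) =
      (\<lambda>t. poly (FF_along m j b t) (- beta al m) / poly (FF_along (Suc m) j b t) (- beta al m))"
    by (simp add: fcoef_def FF_along_def)
  moreover have "(FF_along m j b has_poly_derivative FF_grad m j b) (coord j b)"
    and "(FF_along (Suc m) j b has_poly_derivative FF_grad (Suc m) j b) (coord j b)"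
    using assms(1,2,4) unfolding FF_differentiable_def by blast+
  note DERIV_divide[OF poly_has_real_derivative[OF this(1)] poly_has_real_derivative[OF this(2)]]
  ultimately show ?thesis
    using assms(3) by (simp add: FF_along_coord ratio_grad_def power2_eq_square)
qed

lemma has_poly_derivative_FF_along_Suc_Suc:
  assumes "1 \<le> m" and "FF_differentiable m" and "FF_differentiable (Suc m)"
    and "poly (Fpoly (Suc m)) (- beta al m) \<noteq> 0" and "j \<in> {1..g}"
  shows "(FF_along (Suc (Suc m)) j b has_poly_derivative
    next_grad (Fpoly m) (FF_grad m) (Fpoly (Suc m)) (FF_grad (Suc m)) (- beta al m) j b) (coord j b)"
proof -
  define r where "r t = fcoef N g al (lam_along j b t) (z_along j b t) v m" for t
  have "(FF_along m j b has_poly_derivative FF_grad m j b) (coord j b)"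
    and "(FF_along (Suc m) j b has_poly_derivative FF_grad (Suc m) j b) (coord j b)"
    using assms(2,3,5) unfolding FF_differentiable_def by blast+
  moreover have "(r has_real_derivative
      ratio_grad (Fpoly m) (FF_grad m) (Fpoly (Suc m)) (FF_grad (Suc m)) (- beta al m) j b) (at (coord j b))"
    unfolding r_def using has_real_derivative_fcoef_along[OF assms(2-5)] .
  ultimately have "((\<lambda>t. (FF_along m j b t - smult (r t) (FF_along (Suc m) j b t)) div [:- (- beta al m), 1:])
      has_poly_derivative (FF_grad m j b
        - (smult (ratio_grad (Fpoly m) (FF_grad m) (Fpoly (Suc m)) (FF_grad (Suc m)) (- beta al m) j b)
            (FF_along (Suc m) j b (coord j b)) + smult (r (coord j b)) (FF_grad (Suc m) j b)))
        div [:- (- beta al m), 1:]) (coord j b)"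
    by (intro has_poly_derivative_div_linear has_poly_derivative_diff has_poly_derivative_smult)
  moreover have "FF_along (Suc (Suc m)) j b =
      (\<lambda>t. (FF_along m j b t - smult (r t) (FF_along (Suc m) j b t)) div [:- (- beta al m), 1:])"
    unfolding r_def FF_along_def FF_Suc_Suc[OF assms(1)] next_poly_def fcoef_eq_ratio_at ..
  ultimately show ?thesis
    unfolding r_def by (simp add: next_grad_def FF_along_coord along_coord fcoef_eq_ratio_at diff_diff_eq)
qed

lemma FF_grad_Suc_Suc:
  assumes "1 \<le> m" and "FF_differentiable m" and "FF_differentiable (Suc m)"
    and "poly (Fpoly (Suc m)) (- beta al m) \<noteq> 0"
  shows "FF_grad (Suc (Suc m)) = next_grad (Fpoly m) (FF_grad m) (Fpoly (Suc m)) (FF_grad (Suc m)) (- beta al m)"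
proof (intro ext)
  fix j b
  show "FF_grad (Suc (Suc m)) j b = next_grad (Fpoly m) (FF_grad m) (Fpoly (Suc m)) (FF_grad (Suc m)) (- beta al m) j b"
  proof (cases "j \<in> {1..g}")
    case True
    then show ?thesis
      using FF_grad_eqI has_poly_derivative_FF_along_Suc_Suc[OF assms] by blast
  next
    case False
    then show ?thesis by (simp add: FF_grad_outside next_grad_def ratio_grad_def)
  qed
qed

lemma FF_differentiable_Suc_Suc:
  assumes "1 \<le> m" and "FF_differentiable m" and "FF_differentiable (Suc m)"
    and "poly (Fpoly (Suc m)) (- beta al m) \<noteq> 0"
  shows "FF_differentiable (Suc (Suc m))"
  unfolding FF_differentiable_def FF_grad_Suc_Suc[OF assms]
  using has_poly_derivative_FF_along_Suc_Suc[OF assms] by blast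

lemma generic_FF_nonzero:
  "generic N g al lam z v \<Longrightarrow> 1 \<le> m \<Longrightarrow> m + 2 \<le> N \<Longrightarrow>
    poly (Fpoly (Suc m)) (- beta al m) \<noteq> 0"
  unfolding generic_def by auto

lemma FF_pair_invariant:
  assumes gen: "generic N g al lam z v" and "1 \<le> m" and "Suc m \<le> N"
  shows "FF_differentiable m \<and> FF_differentiable (Suc m) \<and>
    poisson_pair g z (Fpoly m) (FF_grad m) (Fpoly (Suc m)) (FF_grad (Suc m))"
  using assms(2,3)
proof (induction m rule: nat_induct_at_least)
  case base
  have "inj_on lam {1..g}" "\<forall>i\<in>{1..g}. lam i \<noteq> 0" "bzero N g v \<noteq> 0"
    using gen unfolding generic_def by auto
  then show ?case
    using FF_differentiable_1 FF_differentiable_2 poisson_pair_1_2 by (simp add: numeral_2_eq_2)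
next
  case (Suc m)
  have den: "poly (Fpoly (Suc m)) (- beta al m) \<noteq> 0"
    using generic_FF_nonzero[OF gen] Suc by simp
  have "FF_differentiable m" "FF_differentiable (Suc m)"
    and pair: "poisson_pair g z (Fpoly m) (FF_grad m) (Fpoly (Suc m)) (FF_grad (Suc m))"
    using Suc by auto
  then show ?case
    using poisson_pair_next[OF den pair] FF_differentiable_Suc_Suc[OF Suc.hyps _ _ den]
    by (simp add: FF_Suc_Suc[OF Suc.hyps] FF_grad_Suc_Suc[OF Suc.hyps _ _ den])
qed

definition fcoef_grad :: "nat \<Rightarrow> grad" where
  "fcoef_grad m = ratio_grad (Fpoly m) (FF_grad m) (Fpoly (Suc m)) (FF_grad (Suc m)) (- beta al m)"

text \<open>f (N - 1) is the constant coefficient of F (N - 1), and the Casimir v does not contribute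
  to the gradient of f N = 2 v - (f 1 + ... + f (N - 1)).\<close>

definition f_grad :: "nat \<Rightarrow> grad" where
  "f_grad n = (if n \<le> N - 2 then fcoef_grad n else grad_at (FF_grad (N - 1)) 0)"

definition Phi_grad :: "nat \<Rightarrow> grad" where
  "Phi_grad n = (if n = N then (\<lambda>j b. - (\<Sum>i\<in>{1..N - 1}. f_grad i j b)) else f_grad n)"

context
  assumes gen: "generic N g al lam z v" and N3: "3 \<le> N"
begin

lemma FF_differentiable_le: "1 \<le> m \<Longrightarrow> m \<le> N \<Longrightarrow> FF_differentiable m"
  using FF_pair_invariant[OF gen, of m] FF_pair_invariant[OF gen, of "N - 1"] N3
  by (cases "m = N") auto

lemma poisson_pair_Fpoly:
  "1 \<le> m \<Longrightarrow> Suc m \<le> N \<Longrightarrow>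
    poisson_pair g z (Fpoly m) (FF_grad m) (Fpoly (Suc m)) (FF_grad (Suc m))"
  using FF_pair_invariant[OF gen] by blast

lemma FF_grad_step:
  "1 \<le> m \<Longrightarrow> m + 2 \<le> N \<Longrightarrow>
    FF_grad (Suc (Suc m)) = next_grad (Fpoly m) (FF_grad m) (Fpoly (Suc m)) (FF_grad (Suc m)) (- beta al m)"
  using FF_grad_Suc_Suc FF_differentiable_le generic_FF_nonzero[OF gen] by simp

lemma bracket_fcoef_grad_Suc:
  assumes "1 \<le> m" and "m + 3 \<le> N"
  shows "bracket g z (fcoef_grad m) (fcoef_grad (Suc m)) = -1"
proof -
  have "poly (next_poly (Fpoly m) (Fpoly (Suc m)) (- beta al m)) (- beta al (Suc m)) \<noteq> 0"
    using generic_FF_nonzero[OF gen, of "Suc m"] assms by (simp add: FF_Suc_Suc)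
  then show ?thesis
    using bracket_ratio_grad_consecutive[OF generic_FF_nonzero[OF gen] poisson_pair_Fpoly] assms
    by (simp add: fcoef_grad_def FF_grad_step FF_Suc_Suc)
qed

lemma bracket_fcoef_grad_FF_grad:
  assumes "1 \<le> m" and "m + 2 \<le> k" and "k \<le> N"
  shows "bracket g z (fcoef_grad m) (grad_at (FF_grad k) y) = 0"
  using assms(2,3)
proof (induction k arbitrary: y rule: less_induct)
  case (less k)
  have den: "poly (Fpoly (Suc m)) (- beta al m) \<noteq> 0"
    and pair: "poisson_pair g z (Fpoly m) (FF_grad m) (Fpoly (Suc m)) (FF_grad (Suc m))"
    using generic_FF_nonzero[OF gen] poisson_pair_Fpoly assms(1) less.prems by auto
  consider "k = m + 2" | "k = m + 3" | "m + 4 \<le> k"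
    using less.prems by linarith
  then show ?case
  proof cases
    case 1
    then show ?thesis
      using bracket_ratio_grad_next[OF den pair] less.prems assms(1)
      by (simp add: fcoef_grad_def FF_grad_step)
  next
    case 2
    have "poly (next_poly (Fpoly m) (Fpoly (Suc m)) (- beta al m)) (- beta al (Suc m)) \<noteq> 0"
      using generic_FF_nonzero[OF gen, of "Suc m"] less.prems 2 assms(1) by (simp add: FF_Suc_Suc)
    then show ?thesis
      using bracket_ratio_grad_next_next[OF den pair] less.prems 2 assms(1)
      by (simp add: fcoef_grad_def FF_grad_step FF_Suc_Suc numeral_3_eq_3)
  next
    case 3
    define i where "i = k - 2"
    have i: "k = Suc (Suc i)" "m + 2 \<le> i"
      using 3 unfolding i_def by auto
    have "bracket g z (fcoef_grad m) (grad_at (FF_grad i) y) = 0"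
      and "bracket g z (fcoef_grad m) (grad_at (FF_grad (Suc i)) y) = 0" for y
      using less.IH less.prems i by auto
    then show ?thesis
      using bracket_next_grad_eq_0[OF generic_FF_nonzero[OF gen]] FF_grad_step i less.prems assms(1)
      by simp
  qed
qed

lemma bracket_fcoef_grad_far:
  assumes "1 \<le> m" and "m + 2 \<le> n" and "n + 2 \<le> N"
  shows "bracket g z (fcoef_grad m) (fcoef_grad n) = 0"
  unfolding fcoef_grad_def[of n]
proof (rule bracket_ratio_grad_eq_0)
  show "poly (Fpoly (Suc n)) (- beta al n) \<noteq> 0"
    using generic_FF_nonzero[OF gen] assms by simp
  show "bracket g z (fcoef_grad m) (grad_at (FF_grad n) y) = 0"
    and "bracket g z (fcoef_grad m) (grad_at (FF_grad (Suc n)) y) = 0" for y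
    using bracket_fcoef_grad_FF_grad assms by simp_all
qed

lemma bracket_fcoef_grad_last:
  "bracket g z (fcoef_grad (N - 2)) (grad_at (FF_grad (N - 1)) 0) = - poly (Fpoly N) 0"
proof -
  define m where "m = N - 2"
  have m: "1 \<le> m" "m + 2 \<le> N" "Suc m \<le> N" and N: "N - 1 = Suc m" "Suc (Suc m) = N"
    using N3 unfolding m_def by arith+
  have "bracket g z (fcoef_grad m) (grad_at (FF_grad (Suc m)) 0) =
      - poly (next_poly (Fpoly m) (Fpoly (Suc m)) (- beta al m)) 0"
    unfolding fcoef_grad_def
    using bracket_ratio_grad_Q[OF generic_FF_nonzero[OF gen m(1,2)] poisson_pair_Fpoly[OF m(1,3)]] .
  also have "next_poly (Fpoly m) (Fpoly (Suc m)) (- beta al m) = Fpoly N"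
    using FF_Suc_Suc[OF m(1), symmetric] N(2) by simp
  finally show ?thesis
    unfolding m_def[symmetric] N(1) .
qed

lemma bracket_f_grad_less:
  assumes "poly (Fpoly N) 0 = 1" and "1 \<le> m" and "m < n" and "n \<le> N - 1"
  shows "bracket g z (f_grad m) (f_grad n) = (if n = Suc m then -1 else 0)"
proof (cases "n \<le> N - 2")
  case True
  then show ?thesis
    using assms bracket_fcoef_grad_Suc bracket_fcoef_grad_far by (auto simp: f_grad_def)
next
  case False
  then have n: "n = N - 1"
    using assms(4) by simp
  show ?thesis
  proof (cases "m = N - 2")
    case True
    moreover have "N - 1 = Suc (N - 2)"
      using N3 by arith
    ultimately show ?thesis
      using n assms(1) bracket_fcoef_grad_last by (simp add: f_grad_def)
  next
    case False
    then have "m \<le> N - 2" "\<not> N - 1 \<le> N - 2" "m + 2 \<le> N - 1"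
      using n N3 assms(3) by arith+
    then show ?thesis
      using n assms(2) bracket_fcoef_grad_FF_grad[of m "N - 1"] by (simp add: f_grad_def)
  qed
qed

lemma bracket_f_grad:
  assumes "poly (Fpoly N) 0 = 1" and "m \<in> {1..N - 1}" and "n \<in> {1..N - 1}"
  shows "bracket g z (f_grad m) (f_grad n) = tgtPB N m n"
proof -
  have tgt: "tgtPB N m n = (if n = Suc m then -1 else 0)" if "m < n" "n \<le> N - 1" for m n
    using that N3 by (auto simp: tgtPB_def cnext_def)
  consider "m < n" | "m = n" | "n < m"
    by linarith
  then show ?thesis
  proof cases
    case 1
    then show ?thesis using bracket_f_grad_less tgt assms by simp
  next
    case 2
    then show ?thesis using N3 by (simp add: bracket_self tgtPB_def cnext_def)
  next
    case 3
    then show ?thesis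
      using bracket_f_grad_less[of n m] tgt[of n m] assms bracket_antisym[of g z "f_grad m" "f_grad n"]
        tgtPB_antisym[of N n m]
      by simp
  qed
qed

lemma bracket_Phi_grad:
  assumes "poly (Fpoly N) 0 = 1" and "m \<in> {1..N}" and "n \<in> {1..N}"
  shows "bracket g z (Phi_grad m) (Phi_grad n) = tgtPB N m n"
proof -
  have last: "bracket g z (f_grad m) (Phi_grad N) = tgtPB N m N" if "m \<in> {1..N - 1}" for m
  proof -
    have "{1..N} = insert N {1..N - 1}" "N \<notin> {1..N - 1}"
      using N3 by auto
    then have "tgtPB N m N = - (\<Sum>i\<in>{1..N - 1}. tgtPB N m i)"
      using sum_tgtPB[of m N] that by (simp add: algebra_simps)
    also have "\<dots> = bracket g z (f_grad m) (Phi_grad N)"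
      using bracket_f_grad[OF assms(1) that] bracket_neg_sum_right[of "{1..N - 1}" g z]
      by (simp add: Phi_grad_def)
    finally show ?thesis ..
  qed
  consider "m \<noteq> N" "n \<noteq> N" | "m \<noteq> N" "n = N" | "m = N" "n \<noteq> N" | "m = N" "n = N"
    by blast
  then show ?thesis
  proof cases
    case 1
    then have "m \<in> {1..N - 1}" "n \<in> {1..N - 1}"
      using assms by auto
    with 1 show ?thesis using bracket_f_grad[OF assms(1)] by (simp add: Phi_grad_def)
  next
    case 2
    then have "m \<in> {1..N - 1}"
      using assms by auto
    with 2 show ?thesis using last by (simp add: Phi_grad_def)
  next
    case 3
    then have "n \<in> {1..N - 1}"
      using assms by auto
    with 3 show ?thesis
      using last[of n] bracket_antisym[of g z "Phi_grad N"] tgtPB_antisym[of N n N]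
      by (simp add: Phi_grad_def)
  next
    case 4
    then show ?thesis using N3 by (simp add: bracket_self tgtPB_def cnext_def)
  qed
qed

lemma has_real_derivative_f_along:
  assumes "n \<in> {1..N - 1}" and "j \<in> {1..g}"
  shows "((\<lambda>t. Phi N g al (lam_along j b t) (z_along j b t) v n) has_real_derivative f_grad n j b)
    (at (coord j b))"
proof (cases "n \<le> N - 2")
  case True
  then show ?thesis
    using has_real_derivative_fcoef_along[OF FF_differentiable_le FF_differentiable_le
        generic_FF_nonzero[OF gen] assms(2), of n b] assms N3
    by (simp add: Phi_def f_grad_def fcoef_grad_def)
next
  case False
  then have "n = N - 1"
    using assms(1) by simp
  moreover have "(FF_along (N - 1) j b has_poly_derivative FF_grad (N - 1) j b) (coord j b)"
    using FF_differentiable_le[of "N - 1"] N3 assms(2) unfolding FF_differentiable_def by simp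
  ultimately show ?thesis
    using poly_has_real_derivative[of _ _ _ 0] False
    by (simp add: Phi_def f_grad_def FF_along_def grad_at_def poly_0_coeff_0)
qed

lemma has_real_derivative_Phi_along:
  assumes "n \<in> {1..N}" and "j \<in> {1..g}"
  shows "((\<lambda>t. Phi N g al (lam_along j b t) (z_along j b t) v n) has_real_derivative Phi_grad n j b)
    (at (coord j b))"
proof (cases "n = N")
  case True
  have "((\<lambda>t. 2 * v - (\<Sum>i\<in>{1..N - 1}. Phi N g al (lam_along j b t) (z_along j b t) v i))
      has_real_derivative 0 - (\<Sum>i\<in>{1..N - 1}. f_grad i j b)) (at (coord j b))"
    using has_real_derivative_f_along[OF _ assms(2)] by (intro derivative_intros) auto
  then show ?thesis
    using True N3 by (simp add: Phi_N_eq Phi_grad_def)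
next
  case False
  with assms(1) have "n \<in> {1..N - 1}"
    by auto
  with False show ?thesis
    using has_real_derivative_f_along[OF _ assms(2)] by (simp add: Phi_grad_def)
qed

lemma srcPB_Phi:
  assumes "m \<in> {1..N}" and "n \<in> {1..N}"
  shows "srcPB g (\<lambda>l zz vv. Phi N g al l zz vv m) (\<lambda>l zz vv. Phi N g al l zz vv n) lam z v =
    bracket g z (Phi_grad m) (Phi_grad n)"
proof -
  have "dlam (\<lambda>l zz vv. Phi N g al l zz vv k) j lam z v = Phi_grad k j True"
    and "dz (\<lambda>l zz vv. Phi N g al l zz vv k) j lam z v = Phi_grad k j False"
    if "k \<in> {1..N}" "j \<in> {1..g}" for k j
    using DERIV_imp_deriv[OF has_real_derivative_Phi_along[OF that, of True]]
      DERIV_imp_deriv[OF has_real_derivative_Phi_along[OF that, of False]]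
    unfolding dlam_def dz_def lam_along_def z_along_def coord_def by simp_all
  with assms show ?thesis
    unfolding srcPB_def bracket_def by (intro sum.cong) simp_all
qed

end

end

theorem mainTheorem9:
  fixes N g :: nat and al lam z :: "nat \<Rightarrow> real" and v :: real
  assumes "N \<ge> 3" and "g \<ge> 1" and "N = 2*g+1 \<or> N = 2*g+2"
    and "generic N g al lam z v"
  shows "(\<forall>n\<in>{1..N}. \<forall>j\<in>{1..g}.
            (\<lambda>t. Phi N g al (lam(j := t)) z v n) differentiable (at (lam j)) \<and>
            (\<lambda>t. Phi N g al lam (z(j := t)) v n) differentiable (at (z j)))
       \<and> (\<forall>m\<in>{1..N}. \<forall>n\<in>{1..N}.
            srcPB g (\<lambda>l zz vv. Phi N g al l zz vv m) (\<lambda>l zz vv. Phi N g al l zz vv n) lam z v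
              = tgtPB N m n)
       \<and> (even N \<longrightarrow>
            (\<Sum>i\<in>{i\<in>{1..N}. odd i}. Phi N g al lam z v i) = (\<Sum>i\<in>{i\<in>{1..N}. even i}. Phi N g al lam z v i))"
proof (intro conjI ballI impI)
  fix n j assume "n \<in> {1..N}" and "j \<in> {1..g}"
  note deriv = has_real_derivative_Phi_along[OF assms(4,1) this]
  show "(\<lambda>t. Phi N g al (lam(j := t)) z v n) differentiable (at (lam j))"
    using deriv[of True] unfolding lam_along_def z_along_def coord_def
    by (auto intro: differentiableI has_field_derivative_imp_has_derivative)
  show "(\<lambda>t. Phi N g al lam (z(j := t)) v n) differentiable (at (z j))"
    using deriv[of False] unfolding lam_along_def z_along_def coord_def
    by (auto intro: differentiableI has_field_derivative_imp_has_derivative)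
next
  fix m n assume "m \<in> {1..N}" and "n \<in> {1..N}"
  moreover have "poly (FF N g al lam z v N) 0 = 1"
    using poly_FF_N_0[OF assms(3)] assms(4) unfolding generic_def by blast
  ultimately show "srcPB g (\<lambda>l zz vv. Phi N g al l zz vv m) (\<lambda>l zz vv. Phi N g al l zz vv n) lam z v
      = tgtPB N m n"
    using srcPB_Phi[OF assms(4,1)] bracket_Phi_grad[OF assms(4,1)] by simp
next
  assume "even N"
  then have N: "N = 2 * g + 2"
    using assms(3) by auto
  moreover have "v \<noteq> 0"
    using assms(4) N unfolding generic_def bzero_def by auto
  ultimately show "(\<Sum>i\<in>{i\<in>{1..N}. odd i}. Phi N g al lam z v i) =
      (\<Sum>i\<in>{i\<in>{1..N}. even i}. Phi N g al lam z v i)"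
    by (rule sum_odd_Phi_eq_sum_even_Phi)
qed

end
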